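(* Let $(\mathbb{F},\sigma)$ be a difference field, $(\mathbb{F}(t),\sigma)$ a $\Pi\Sigma$-extension, $A\in\mathbb{F}(t)[\sigma]^{m\times n}$ and $b\in\mathbb{F}(t)^m$. Then there exist an integer $r$ (the rank of $A$), unimodular matrices $P\in\mathrm{GL}_m(\mathbb{F}(t)[\sigma,\sigma^{-1}])$ and $Q\in\mathrm{GL}_n(\mathbb{F}(t)[\sigma])$, and $\hat A\in\mathbb{F}(t)[\sigma]^{r\times r}$ such that $$PAQ=\begin{pmatrix}\hat A&0\\0&0\end{pmatrix},$$ and, writing $P(b)=\binom{b_1}{b_2}$ with $b_1\in\mathbb{F}(t)^r$, $b_2\in\mathbb{F}(t)^{m-r}$, the following hold: (i) $y\in\mathbb{F}(t)^n$ solves $A(y)=b$ if and only if $b_2=0$ and $Q^{-1}(y)=\binom{y_1}{y_2}$ with $y_1\in\mathbb{F}(t)^r$ satisfying $\hat A(y_1)=b_1$ and $y_2\in\mathbb{F}(t)^{n-r}$ arbitrary; (ii) there is $c\in\mathbb{F}[t]\setminus\{0\}$ such that $c\hat A$ has coefficient matrices in $\mathbb{F}[t]^{r\times r}$, $cb_1\in\mathbb{F}[t]^r$, and the system $(c\hat A)(y_1)=cb_1$ is fully regular. In particular every system of the form $A_\ell\sigma^\ell(y)+\dots+A_0y=b$ can be transformed into a related fully regular system, subject to the compatibility condition $b_2=0$.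
   Context: A difference field $(\mathbb{F},\sigma)$ is a field (containing $\mathbb{Q}$) with an automorphism $\sigma$; in a $\Pi\Sigma$-extension $(\mathbb{F}(t),\sigma)$, $\sigma$ extends to the rational function field with $\sigma(t)=t+\beta$ or $\sigma(t)=\alpha t$ ($\alpha,\beta\in\mathbb{F}\setminus\{0\}$) and no new constants. $\mathbb{F}(t)[\sigma]$ is the Ore polynomial ring: polynomials $\sum a_i\sigma^i$, $a_i\in\mathbb{F}(t)$, with multiplication determined by $\sigma a=\sigma(a)\sigma$; $\mathbb{F}(t)[\sigma,\sigma^{-1}]$ is its localisation at the powers of $\sigma$. An operator $\sum a_i\sigma^i$ acts on $\alpha\in\mathbb{F}(t)$ by $\sum a_i\sigma^i(\alpha)$; an operator matrix $L=(L_{ij})$ acts on a vector $\alpha$ by $L(\alpha)=(\sum_jL_{ij}(\alpha_j))_i$. A square matrix is unimodular if it has a two-sided inverse over the same ring. The rank of $A$ is the row rank of $A$ over $\mathbb{F}(t)[\sigma]$. A square system $\hat A(y)=\hat b$ with $\hat A=\sum_{i=0}^{\ell}\hat A_i\sigma^i$, $\hat A_i\in\mathbb{F}[t]^{r\times r}$, is head regular if $\det\hat A_\ell\ne0$, tail regular if $\det\hat A_0\ne0$, and fully regular if it is head regular and there exists $W\in\mathrm{GL}_r(\mathbb{F}(t)[\sigma,\sigma^{-1}])$ with $W\hat A\in\mathbb{F}(t)[\sigma]^{r\times r}$ such that $(W\hat A)(\tilde y)=W(\hat b)$ is tail regular. *)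

theory Defs
  imports "HOL-Computational_Algebra.Fraction_Field" "HOL-Computational_Algebra.Polynomial"
    "Jordan_Normal_Form.Determinant"
begin

text \<open>The base field F is a type 'a of class field_char_0; F(t) is the field of fractions
  of F[t], i.e. 'a poly fract.\<close>

definition embF :: "'a::field \<Rightarrow> 'a poly fract" where
  "embF c = Fract [:c:] 1"

definition embP :: "'a::field poly \<Rightarrow> 'a poly fract" where
  "embP p = Fract p 1"

definition tvar :: "'a::field poly fract" where
  "tvar = Fract [:0, 1:] 1"

definition is_automorphism :: "('k::field \<Rightarrow> 'k) \<Rightarrow> bool" where
  "is_automorphism s \<longleftrightarrow> bij s \<and> (\<forall>x y. s (x + y) = s x + s y) \<and>
     (\<forall>x y. s (x * y) = s x * s y) \<and> s 1 = 1"

definition difference_field :: "('a::field_char_0 \<Rightarrow> 'a) \<Rightarrow> bool" where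
  "difference_field s0 \<longleftrightarrow> is_automorphism s0"

definition PiSigma_ext :: "('a::field_char_0 \<Rightarrow> 'a) \<Rightarrow> ('a poly fract \<Rightarrow> 'a poly fract) \<Rightarrow> bool" where
  "PiSigma_ext s0 s \<longleftrightarrow> difference_field s0 \<and> is_automorphism s \<and>
     (\<forall>c. s (embF c) = embF (s0 c)) \<and>
     ((\<exists>\<beta>. \<beta> \<noteq> 0 \<and> s tvar = tvar + embF \<beta>) \<or> (\<exists>\<alpha>. \<alpha> \<noteq> 0 \<and> s tvar = embF \<alpha> * tvar)) \<and>
     (\<forall>f. s f = f \<longrightarrow> (\<exists>c. f = embF c))"

type_synonym 'k op = "int \<Rightarrow> 'k"
type_synonym 'k opmat = "nat \<Rightarrow> nat \<Rightarrow> 'k op"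

definition sigma_pow :: "('k \<Rightarrow> 'k) \<Rightarrow> int \<Rightarrow> 'k \<Rightarrow> 'k" where
  "sigma_pow s i = (if 0 \<le> i then s ^^ nat i else (inv_into UNIV s) ^^ nat (- i))"

definition op_supp :: "'k::zero op \<Rightarrow> int set" where
  "op_supp L = {i. L i \<noteq> 0}"

definition laurent_op :: "'k::zero op \<Rightarrow> bool" where
  "laurent_op L \<longleftrightarrow> finite (op_supp L)"

definition ore_op :: "'k::zero op \<Rightarrow> bool" where
  "ore_op L \<longleftrightarrow> laurent_op L \<and> (\<forall>i<0. L i = 0)"

definition op_zero :: "'k::zero op" where
  "op_zero = (\<lambda>_. 0)"

definition op_one :: "'k::{zero,one} op" where
  "op_one = (\<lambda>i. if i = 0 then 1 else 0)"

definition op_apply :: "('k::field \<Rightarrow> 'k) \<Rightarrow> 'k op \<Rightarrow> 'k \<Rightarrow> 'k" where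
  "op_apply s L f = (\<Sum>i\<in>op_supp L. L i * sigma_pow s i f)"

text \<open>Ore multiplication: \<open>(a \<sigma>^i)(b \<sigma>^j) = a \<sigma>^i(b) \<sigma>^(i+j)\<close>.\<close>
definition op_mult :: "('k::field \<Rightarrow> 'k) \<Rightarrow> 'k op \<Rightarrow> 'k op \<Rightarrow> 'k op" where
  "op_mult s L M = (\<lambda>k. \<Sum>i\<in>op_supp L. L i * sigma_pow s i (M (k - i)))"

definition mat_mult :: "('k::field \<Rightarrow> 'k) \<Rightarrow> 'k opmat \<Rightarrow> 'k opmat \<Rightarrow> nat \<Rightarrow> 'k opmat" where
  "mat_mult s A B n = (\<lambda>i k. (\<lambda>d. \<Sum>j<n. op_mult s (A i j) (B j k) d))"

definition mat_id :: "'k::field opmat" where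
  "mat_id = (\<lambda>i j. if i = j then op_one else op_zero)"

definition mat_apply :: "('k::field \<Rightarrow> 'k) \<Rightarrow> 'k opmat \<Rightarrow> nat \<Rightarrow> (nat \<Rightarrow> 'k) \<Rightarrow> (nat \<Rightarrow> 'k)" where
  "mat_apply s A n y = (\<lambda>i. \<Sum>j<n. op_apply s (A i j) (y j))"

definition laurent_mat :: "'k::zero opmat \<Rightarrow> nat \<Rightarrow> nat \<Rightarrow> bool" where
  "laurent_mat A m n \<longleftrightarrow> (\<forall>i<m. \<forall>j<n. laurent_op (A i j))"

definition ore_mat :: "'k::zero opmat \<Rightarrow> nat \<Rightarrow> nat \<Rightarrow> bool" where
  "ore_mat A m n \<longleftrightarrow> (\<forall>i<m. \<forall>j<n. ore_op (A i j))"

definition mat_eq :: "'k opmat \<Rightarrow> 'k opmat \<Rightarrow> nat \<Rightarrow> nat \<Rightarrow> bool" where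
  "mat_eq A B m n \<longleftrightarrow> (\<forall>i<m. \<forall>j<n. A i j = B i j)"

definition is_inverse :: "('k::field \<Rightarrow> 'k) \<Rightarrow> 'k opmat \<Rightarrow> 'k opmat \<Rightarrow> nat \<Rightarrow> bool" where
  "is_inverse s P P' m \<longleftrightarrow> mat_eq (mat_mult s P P' m) mat_id m m \<and> mat_eq (mat_mult s P' P m) mat_id m m"

definition unimodular_laurent :: "('k::field \<Rightarrow> 'k) \<Rightarrow> 'k opmat \<Rightarrow> nat \<Rightarrow> bool" where
  "unimodular_laurent s P m \<longleftrightarrow> laurent_mat P m m \<and> (\<exists>P'. laurent_mat P' m m \<and> is_inverse s P P' m)"

definition left_lin_indep :: "('k::field \<Rightarrow> 'k) \<Rightarrow> 'k opmat \<Rightarrow> nat set \<Rightarrow> nat \<Rightarrow> bool" where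
  "left_lin_indep s A S n \<longleftrightarrow>
     (\<forall>u. (\<forall>i\<in>S. ore_op (u i)) \<and>
          (\<forall>j<n. (\<lambda>d. \<Sum>i\<in>S. op_mult s (u i) (A i j) d) = op_zero)
          \<longrightarrow> (\<forall>i\<in>S. u i = op_zero))"

definition op_rank :: "('k::field \<Rightarrow> 'k) \<Rightarrow> 'k opmat \<Rightarrow> nat \<Rightarrow> nat \<Rightarrow> nat" where
  "op_rank s A m n = Max {card S | S. S \<subseteq> {..<m} \<and> left_lin_indep s A S n}"

definition coeff_mat :: "'k opmat \<Rightarrow> nat \<Rightarrow> int \<Rightarrow> 'k mat" where
  "coeff_mat A r i = mat r r (\<lambda>(j, k). A j k i)"

definition op_mat_order :: "'k::zero opmat \<Rightarrow> nat \<Rightarrow> int" where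
  "op_mat_order A r = Max ({i. \<exists>j<r. \<exists>k<r. A j k i \<noteq> 0} \<union> {0})"

definition poly_coeff_mat :: "'a::field poly fract opmat \<Rightarrow> nat \<Rightarrow> bool" where
  "poly_coeff_mat A r \<longleftrightarrow> ore_mat A r r \<and> (\<forall>j<r. \<forall>k<r. \<forall>i. A j k i \<in> range embP)"

definition head_regular :: "'k::comm_ring_1 opmat \<Rightarrow> nat \<Rightarrow> bool" where
  "head_regular A r \<longleftrightarrow> det (coeff_mat A r (op_mat_order A r)) \<noteq> 0"

definition tail_regular :: "'k::comm_ring_1 opmat \<Rightarrow> nat \<Rightarrow> bool" where
  "tail_regular A r \<longleftrightarrow> det (coeff_mat A r 0) \<noteq> 0"

text \<open>The system A(y) = b (A with coefficient matrices over F[t]) is fully regular.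
  The right-hand side plays no role in the regularity notions.\<close>
definition fully_regular ::
  "('a::field poly fract \<Rightarrow> 'a poly fract) \<Rightarrow> 'a poly fract opmat \<Rightarrow> (nat \<Rightarrow> 'a poly fract) \<Rightarrow> nat \<Rightarrow> bool" where
  "fully_regular s A b r \<longleftrightarrow> poly_coeff_mat A r \<and> head_regular A r \<and>
     (\<exists>W. unimodular_laurent s W r \<and> ore_mat (mat_mult s W A r) r r \<and>
          tail_regular (mat_mult s W A r) r)"

end

theory Submission
  imports Defs
begin

text \<open>The Ore operators \<open>F(t)[\<sigma>]\<close> form a left and right Euclidean ring for the degree in
  \<open>\<sigma>\<close>, hence satisfy the Ore condition. Swapping a nonzero entry into the corner and dividing the
  first row and column by it leaves remainders of smaller degree; iterating, \<open>A\<close> is brought by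
  unimodular row and column operations to \<open>diag(d\<^sub>1, \<dots>, d\<^sub>r, 0, \<dots>)\<close>. The Ore condition
  makes the row rank invariant under these operations, so \<open>r\<close> is the rank, and the solution
  sets correspond through \<open>P\<close> and \<open>Q\<close>.
  Multiplying row \<open>i\<close> by \<open>\<sigma>^(l - deg d\<^sub>i)\<close> gives all diagonal entries the same degree, so the
  leading coefficient matrix is an invertible diagonal matrix; clearing denominators yields
  polynomial coefficients, and multiplying row \<open>i\<close> by a negative power of \<open>\<sigma>\<close> over
  \<open>F(t)[\<sigma>,\<sigma>\<^sup>-\<^sup>1]\<close> makes the trailing coefficient matrix invertible as well.\<close>

lemma automorphism_bij: "is_automorphism f \<Longrightarrow> bij f"
  and automorphism_add: "is_automorphism f \<Longrightarrow> f (x + y) = f x + f y"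
  and automorphism_mult: "is_automorphism f \<Longrightarrow> f (x * y) = f x * f y"
  and automorphism_one: "is_automorphism f \<Longrightarrow> f 1 = 1"
  by (simp_all add: is_automorphism_def)

lemma automorphism_zero: "is_automorphism (f :: 'k::field \<Rightarrow> 'k) \<Longrightarrow> f 0 = 0"
  using automorphism_add[of f 0 0] by (metis add_cancel_right_right add_0)

lemma automorphism_uminus: "is_automorphism (f :: 'k::field \<Rightarrow> 'k) \<Longrightarrow> f (- x) = - f x"
  using automorphism_add[of f x "- x"] automorphism_zero[of f] by (simp add: eq_neg_iff_add_eq_0 add.commute)

lemma automorphism_sum:
  "is_automorphism (f :: 'k::field \<Rightarrow> 'k) \<Longrightarrow> f (\<Sum>i\<in>I. g i) = (\<Sum>i\<in>I. f (g i))"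
  by (induction I rule: infinite_finite_induct) (auto simp: automorphism_zero automorphism_add)

lemma automorphism_eq_0_iff: "is_automorphism (f :: 'k::field \<Rightarrow> 'k) \<Longrightarrow> f x = 0 \<longleftrightarrow> x = 0"
  by (metis automorphism_zero automorphism_bij bij_is_inj injD)

lemma automorphism_inv:
  assumes "is_automorphism f" shows "is_automorphism (inv_into UNIV f)"
proof -
  have b: "bij f" using assms automorphism_bij by blast
  have f_inv: "f (inv_into UNIV f x) = x" for x using b by (simp add: bij_is_surj surj_f_inv_f)
  have inj: "f x = f y \<Longrightarrow> x = y" for x y using b by (metis bij_is_inj injD)
  show ?thesis unfolding is_automorphism_def
  proof (intro conjI allI)
    show "bij (inv_into UNIV f)" using b by (simp add: bij_imp_bij_inv)
    fix x y
    show "inv_into UNIV f (x + y) = inv_into UNIV f x + inv_into UNIV f y"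
      by (rule inj) (simp add: automorphism_add[OF assms] f_inv)
    show "inv_into UNIV f (x * y) = inv_into UNIV f x * inv_into UNIV f y"
      by (rule inj) (simp add: automorphism_mult[OF assms] f_inv)
    show "inv_into UNIV f 1 = 1"
      by (rule inj) (simp add: automorphism_one[OF assms] f_inv)
  qed
qed

lemma automorphism_funpow:
  assumes "is_automorphism f" shows "is_automorphism (f ^^ n)"
proof (induction n)
  case 0 then show ?case by (simp add: is_automorphism_def bij_def inj_on_def)
next
  case (Suc n) then show ?case using assms unfolding is_automorphism_def by (auto simp: bij_comp)
qed

lemma automorphism_sigma_pow: "is_automorphism s \<Longrightarrow> is_automorphism (sigma_pow s i)"
  by (simp add: sigma_pow_def automorphism_funpow automorphism_inv)

lemma sigma_pow_0 [simp]: "sigma_pow s 0 = id"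
  by (simp add: sigma_pow_def)

lemma sigma_pow_plus_1:
  assumes "is_automorphism s" shows "sigma_pow s (i + 1) x = s (sigma_pow s i x)"
proof (cases "0 \<le> i")
  case True
  then have "nat (i + 1) = Suc (nat i)" by simp
  with True show ?thesis by (simp add: sigma_pow_def)
next
  case False
  have "s (inv_into UNIV s y) = y" for y
    using automorphism_bij[OF assms] by (simp add: bij_is_surj surj_f_inv_f)
  moreover have "nat (- i) = Suc (nat (- (i + 1)))" using False by simp
  ultimately show ?thesis using False by (cases "i = -1") (auto simp: sigma_pow_def)
qed

lemma sigma_pow_sigma_pow:
  assumes "is_automorphism s" shows "sigma_pow s j (sigma_pow s i x) = sigma_pow s (j + i) x"
proof (induction j rule: int_induct[where k = 0])
  case base then show ?case by simp
next
  case (step1 j)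
  then show ?case using sigma_pow_plus_1[OF assms, of j] sigma_pow_plus_1[OF assms, of "j + i"]
    by (simp add: ac_simps)
next
  case (step2 j)
  have inj: "s x = s y \<Longrightarrow> x = y" for x y
    using automorphism_bij[OF assms] by (metis bij_is_inj injD)
  have "s (sigma_pow s (j - 1) y) = sigma_pow s j y" for y
    using sigma_pow_plus_1[OF assms, of "j - 1" y] by simp
  moreover have "s (sigma_pow s (j - 1 + i) x) = sigma_pow s (j + i) x"
    using sigma_pow_plus_1[OF assms, of "j - 1 + i" x] by (simp add: algebra_simps)
  ultimately show ?case using step2 by (metis inj)
qed

locale field_automorphism =
  fixes s :: "'k::field \<Rightarrow> 'k"
  assumes automorphism: "is_automorphism s"
begin

abbreviation sp where "sp \<equiv> sigma_pow s"

lemma sp_add: "sp i (x + y) = sp i x + sp i y"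
  using automorphism_add[OF automorphism_sigma_pow[OF automorphism]] .
lemma sp_mult: "sp i (x * y) = sp i x * sp i y"
  using automorphism_mult[OF automorphism_sigma_pow[OF automorphism]] .
lemma sp_zero [simp]: "sp i 0 = 0"
  using automorphism_zero[OF automorphism_sigma_pow[OF automorphism]] .
lemma sp_one [simp]: "sp i 1 = 1"
  using automorphism_one[OF automorphism_sigma_pow[OF automorphism]] .
lemma sp_uminus: "sp i (- x) = - sp i x"
  using automorphism_uminus[OF automorphism_sigma_pow[OF automorphism]] .
lemma sp_sum: "sp i (\<Sum>j\<in>J. g j) = (\<Sum>j\<in>J. sp i (g j))"
  using automorphism_sum[OF automorphism_sigma_pow[OF automorphism]] .
lemma sp_eq_0_iff [simp]: "sp i x = 0 \<longleftrightarrow> x = 0"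
  using automorphism_eq_0_iff[OF automorphism_sigma_pow[OF automorphism]] .
lemma sp_sp: "sp j (sp i x) = sp (j + i) x"
  using sigma_pow_sigma_pow[OF automorphism] .

end

section \<open>The ring of Ore operators\<close>

definition op_add :: "'k::ab_group_add op \<Rightarrow> 'k op \<Rightarrow> 'k op" where
  "op_add L M = (\<lambda>d. L d + M d)"

definition op_neg :: "'k::ab_group_add op \<Rightarrow> 'k op" where
  "op_neg L = (\<lambda>d. - L d)"

definition op_sum :: "('i \<Rightarrow> 'k::ab_group_add op) \<Rightarrow> 'i set \<Rightarrow> 'k op" where
  "op_sum F J = (\<lambda>d. \<Sum>j\<in>J. F j d)"

definition op_monom :: "'k::zero \<Rightarrow> int \<Rightarrow> 'k op" where
  "op_monom c k = (\<lambda>i. if i = k then c else 0)"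

lemma op_zero_apply: "op_zero d = 0" by (simp add: op_zero_def)
lemma op_add_apply: "op_add L M d = L d + M d" by (simp add: op_add_def)
lemma op_neg_apply: "op_neg L d = - L d" by (simp add: op_neg_def)
lemma op_sum_apply: "op_sum F J d = (\<Sum>j\<in>J. F j d)" by (simp add: op_sum_def)

text \<open>These are not simp rules: by eta-expansion they would rewrite every operator-valued term
  into a lambda.\<close>
lemmas op_coeff_simps = op_zero_apply op_add_apply op_neg_apply op_sum_apply

lemma op_neg_neg [simp]: "op_neg (op_neg L) = L"
  by (simp add: fun_eq_iff op_coeff_simps)

lemma op_one_neq_zero [simp]: "(op_one :: 'k::zero_neq_one op) \<noteq> op_zero"
  by (auto simp: op_one_def op_zero_def fun_eq_iff op_coeff_simps)

lemma op_add_zero [simp]: "op_add L op_zero = L" "op_add op_zero L = L"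
  by (simp_all add: fun_eq_iff op_coeff_simps)

lemma op_add_neg [simp]: "op_add L (op_neg L) = op_zero" "op_add (op_neg L) L = op_zero"
  by (simp_all add: fun_eq_iff op_coeff_simps)

lemma op_sum_zero [simp]: "op_sum (\<lambda>h. op_zero) J = op_zero"
  by (simp add: fun_eq_iff op_coeff_simps)

lemma op_sum_cong: "(\<And>j. j \<in> J \<Longrightarrow> F j = G j) \<Longrightarrow> op_sum F J = op_sum G J"
  by (simp add: op_sum_def)

lemma op_sum_zeroI: "(\<And>j. j \<in> J \<Longrightarrow> F j = op_zero) \<Longrightarrow> op_sum F J = op_zero"
  by (simp add: fun_eq_iff op_coeff_simps)

lemma op_sum_swap: "op_sum (\<lambda>g. op_sum (\<lambda>h. F h g) H) G = op_sum (\<lambda>h. op_sum (\<lambda>g. F h g) G) H"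
  by (simp add: fun_eq_iff op_coeff_simps sum.swap[of _ G])

lemma op_sum_insert: "finite S \<Longrightarrow> x \<notin> S \<Longrightarrow> op_sum F (insert x S) = op_add (F x) (op_sum F S)"
  by (simp add: fun_eq_iff op_coeff_simps)

lemma op_sum_delta:
  assumes "finite J" "i \<in> J" shows "op_sum (\<lambda>h. if h = i then F h else op_zero) J = F i"
proof
  fix x
  have "op_sum (\<lambda>h. if h = i then F h else op_zero) J x = (\<Sum>j\<in>J. if j = i then F j x else 0)"
    by (auto simp: op_coeff_simps intro: sum.cong)
  then show "op_sum (\<lambda>h. if h = i then F h else op_zero) J x = F i x"
    using assms by (simp add: sum.delta)
qed

lemma op_supp_finite: "laurent_op L \<Longrightarrow> finite (op_supp L)"
  by (simp add: laurent_op_def)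
lemma ore_op_laurent: "ore_op L \<Longrightarrow> laurent_op L"
  by (simp add: ore_op_def)
lemma ore_op_neg_index: "ore_op L \<Longrightarrow> i < 0 \<Longrightarrow> L i = 0"
  by (simp add: ore_op_def)
lemma in_op_supp_iff: "i \<in> op_supp L \<longleftrightarrow> L i \<noteq> 0"
  by (simp add: op_supp_def)

lemma laurent_op_subset_singleton:
  assumes "op_supp L \<subseteq> {k}" shows "laurent_op L"
  using assms finite_subset by (auto simp: laurent_op_def)

lemma laurent_op_zero [simp]: "laurent_op op_zero"
  by (simp add: laurent_op_def op_supp_def op_zero_apply)
lemma ore_op_zero [simp]: "ore_op op_zero"
  by (simp add: ore_op_def op_zero_apply)
lemma laurent_op_one [simp]: "laurent_op (op_one :: 'k::{zero,one} op)"
  by (rule laurent_op_subset_singleton[of _ 0]) (auto simp: op_supp_def op_one_def)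
lemma ore_op_one [simp]: "ore_op (op_one :: 'k::{zero,one} op)"
  by (simp add: ore_op_def) (simp add: op_one_def)
lemma laurent_op_monom [simp]: "laurent_op (op_monom c k)"
  by (rule laurent_op_subset_singleton[of _ k]) (auto simp: op_supp_def op_monom_def)
lemma ore_op_monom: "0 \<le> k \<Longrightarrow> ore_op (op_monom c k)"
  by (simp add: ore_op_def) (simp add: op_monom_def)

lemma laurent_op_add [simp]: "laurent_op L \<Longrightarrow> laurent_op M \<Longrightarrow> laurent_op (op_add L M)"
  unfolding laurent_op_def by (rule finite_subset[of _ "op_supp L \<union> op_supp M"]) (auto simp: op_supp_def op_add_apply)
lemma ore_op_add [simp]: "ore_op L \<Longrightarrow> ore_op M \<Longrightarrow> ore_op (op_add L M)"
  by (simp add: ore_op_def op_add_apply)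
lemma laurent_op_neg [simp]: "laurent_op L \<Longrightarrow> laurent_op (op_neg L)"
  by (simp add: laurent_op_def op_supp_def op_neg_apply)
lemma ore_op_neg [simp]: "ore_op L \<Longrightarrow> ore_op (op_neg L)"
  by (simp add: ore_op_def laurent_op_def op_supp_def op_neg_apply)

lemma op_supp_sum: "op_supp (op_sum F J) \<subseteq> (\<Union>j\<in>J. op_supp (F j))"
proof
  fix d assume "d \<in> op_supp (op_sum F J)"
  then have "(\<Sum>j\<in>J. F j d) \<noteq> 0" by (simp add: op_supp_def op_sum_apply)
  then obtain j where "j \<in> J" "F j d \<noteq> 0" by (meson sum.not_neutral_contains_not_neutral)
  then show "d \<in> (\<Union>j\<in>J. op_supp (F j))" by (auto simp: op_supp_def)
qed

lemma laurent_op_sum [simp]: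
  "finite J \<Longrightarrow> (\<And>j. j \<in> J \<Longrightarrow> laurent_op (F j)) \<Longrightarrow> laurent_op (op_sum F J)"
  unfolding laurent_op_def by (rule finite_subset[OF op_supp_sum]) auto
lemma ore_op_sum [simp]:
  "finite J \<Longrightarrow> (\<And>j. j \<in> J \<Longrightarrow> ore_op (F j)) \<Longrightarrow> ore_op (op_sum F J)"
  by (simp add: ore_op_def op_sum_apply)

context field_automorphism
begin

lemma op_mult_eq_sum_over:
  assumes "finite U" "op_supp L \<subseteq> U"
  shows "op_mult s L M k = (\<Sum>i\<in>U. L i * sp i (M (k - i)))"
  unfolding op_mult_def by (rule sum.mono_neutral_left) (use assms in \<open>auto simp: op_supp_def\<close>)

lemma op_apply_eq_sum_over:
  assumes "finite U" "op_supp L \<subseteq> U"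
  shows "op_apply s L f = (\<Sum>i\<in>U. L i * sp i f)"
  unfolding op_apply_def by (rule sum.mono_neutral_left) (use assms in \<open>auto simp: op_supp_def\<close>)

lemma op_supp_mult:
  "op_supp (op_mult s L M) \<subseteq> (\<lambda>(a, b). a + b) ` (op_supp L \<times> op_supp M)"
proof
  fix k assume "k \<in> op_supp (op_mult s L M)"
  then have "(\<Sum>i\<in>op_supp L. L i * sp i (M (k - i))) \<noteq> 0" by (simp add: op_supp_def op_mult_def)
  then obtain i where i: "i \<in> op_supp L" "L i * sp i (M (k - i)) \<noteq> 0"
    by (meson sum.not_neutral_contains_not_neutral)
  then have "(i, k - i) \<in> op_supp L \<times> op_supp M" by (auto simp: op_supp_def)
  then show "k \<in> (\<lambda>(a, b). a + b) ` (op_supp L \<times> op_supp M)" by force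
qed

lemma laurent_op_mult [simp]: "laurent_op L \<Longrightarrow> laurent_op M \<Longrightarrow> laurent_op (op_mult s L M)"
  unfolding laurent_op_def by (rule finite_subset[OF op_supp_mult]) simp

lemma ore_op_mult [simp]:
  assumes "ore_op L" "ore_op M" shows "ore_op (op_mult s L M)"
proof -
  have "op_mult s L M k = 0" if "k < 0" for k
    unfolding op_mult_def
  proof (rule sum.neutral, clarify)
    fix i assume "i \<in> op_supp L"
    then have "0 \<le> i" using assms(1) by (metis linorder_not_le ore_op_neg_index in_op_supp_iff)
    then show "L i * sp i (M (k - i)) = 0" using assms(2) that by (simp add: ore_op_neg_index)
  qed
  then show ?thesis using assms by (simp add: ore_op_def)
qed

text \<open>Both associativity of the Ore product and its compatibility with the action reduce to
  this reindexing of a double sum along \<open>h = i + j\<close>.\<close>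
lemma sum_convolution:
  assumes "finite U" "op_supp L \<subseteq> U" "finite V" "op_supp M \<subseteq> V"
    and H: "finite H" "(\<lambda>(a, b). a + b) ` (U \<times> V) \<subseteq> H"
  shows "(\<Sum>h\<in>H. (\<Sum>i\<in>U. L i * sp i (M (h - i))) * G h)
       = (\<Sum>i\<in>U. \<Sum>j\<in>V. L i * sp i (M j) * G (i + j))"
proof -
  have "(\<Sum>h\<in>H. (\<Sum>i\<in>U. L i * sp i (M (h - i))) * G h)
      = (\<Sum>i\<in>U. \<Sum>h\<in>H. L i * sp i (M (h - i)) * G h)"
    by (simp add: sum_distrib_right sum.swap[of _ H])
  also have "\<dots> = (\<Sum>i\<in>U. \<Sum>j\<in>V. L i * sp i (M j) * G (i + j))"
  proof (rule sum.cong[OF refl])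
    fix i assume i: "i \<in> U"
    have sub: "(\<lambda>j. i + j) ` V \<subseteq> H" using H(2) i by force
    have "(\<Sum>h\<in>H. L i * sp i (M (h - i)) * G h) = (\<Sum>h\<in>(\<lambda>j. i + j) ` V. L i * sp i (M (h - i)) * G h)"
    proof (rule sum.mono_neutral_right[OF H(1) sub], clarify)
      fix h assume "h \<in> H" "h \<notin> (\<lambda>j. i + j) ` V"
      then have "h - i \<notin> V" by force
      then show "L i * sp i (M (h - i)) * G h = 0" using assms(4) by (auto simp: op_supp_def)
    qed
    also have "\<dots> = (\<Sum>j\<in>V. L i * sp i (M j) * G (i + j))"
      by (subst sum.reindex) (auto simp: inj_on_def)
    finally show "(\<Sum>h\<in>H. L i * sp i (M (h - i)) * G h) = (\<Sum>j\<in>V. L i * sp i (M j) * G (i + j))" .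
  qed
  finally show ?thesis .
qed

lemma op_mult_assoc:
  assumes "laurent_op L" "laurent_op M"
  shows "op_mult s (op_mult s L M) N = op_mult s L (op_mult s M N)"
proof
  fix k
  let ?U = "op_supp L" and ?V = "op_supp M"
  let ?H = "(\<lambda>(a, b). a + b) ` (?U \<times> ?V)"
  have fin: "finite ?U" "finite ?V" "finite ?H" using assms by (auto simp: laurent_op_def)
  have "op_mult s (op_mult s L M) N k = (\<Sum>h\<in>?H. op_mult s L M h * sp h (N (k - h)))"
    by (rule op_mult_eq_sum_over[OF fin(3) op_supp_mult])
  also have "\<dots> = (\<Sum>h\<in>?H. (\<Sum>i\<in>?U. L i * sp i (M (h - i))) * sp h (N (k - h)))"
    by (simp add: op_mult_def)
  also have "\<dots> = (\<Sum>i\<in>?U. \<Sum>j\<in>?V. L i * sp i (M j) * sp (i + j) (N (k - (i + j))))"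
    by (rule sum_convolution[OF fin(1) order.refl fin(2) order.refl fin(3) order.refl])
  also have "\<dots> = (\<Sum>i\<in>?U. L i * sp i (\<Sum>j\<in>?V. M j * sp j (N (k - (i + j)))))"
    by (simp add: sp_sum sp_mult sp_sp sum_distrib_left mult.assoc)
  also have "\<dots> = op_mult s L (op_mult s M N) k"
    by (simp only: op_mult_def diff_diff_eq)
  finally show "op_mult s (op_mult s L M) N k = op_mult s L (op_mult s M N) k" .
qed

lemma op_apply_mult:
  assumes "laurent_op L" "laurent_op M"
  shows "op_apply s (op_mult s L M) f = op_apply s L (op_apply s M f)"
proof -
  let ?U = "op_supp L" and ?V = "op_supp M"
  let ?H = "(\<lambda>(a, b). a + b) ` (?U \<times> ?V)"
  have fin: "finite ?U" "finite ?V" "finite ?H" using assms by (auto simp: laurent_op_def)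
  have "op_apply s (op_mult s L M) f = (\<Sum>h\<in>?H. op_mult s L M h * sp h f)"
    by (rule op_apply_eq_sum_over[OF fin(3) op_supp_mult])
  also have "\<dots> = (\<Sum>h\<in>?H. (\<Sum>i\<in>?U. L i * sp i (M (h - i))) * sp h f)"
    by (simp add: op_mult_def)
  also have "\<dots> = (\<Sum>i\<in>?U. \<Sum>j\<in>?V. L i * sp i (M j) * sp (i + j) f)"
    by (rule sum_convolution[OF fin(1) order.refl fin(2) order.refl fin(3) order.refl])
  also have "\<dots> = op_apply s L (op_apply s M f)"
    by (simp add: op_apply_def sp_sum sp_mult sp_sp sum_distrib_left mult.assoc)
  finally show ?thesis .
qed

lemma op_mult_zero [simp]: "op_mult s op_zero M = op_zero" "op_mult s L op_zero = op_zero"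
  by (simp_all add: op_mult_def op_supp_def op_zero_def)

lemma op_mult_monom_left: "op_mult s (op_monom c j) M = (\<lambda>d. c * sp j (M (d - j)))"
proof
  fix k
  have "op_supp (op_monom c j) \<subseteq> {j}" by (auto simp: op_supp_def op_monom_def)
  then show "op_mult s (op_monom c j) M k = c * sp j (M (k - j))"
    by (subst op_mult_eq_sum_over[of "{j}"]) (auto simp: op_monom_def)
qed

lemma op_mult_monom_right:
  assumes "laurent_op L" shows "op_mult s L (op_monom c j) = (\<lambda>d. L (d - j) * sp (d - j) c)"
proof
  fix k
  have f: "finite (insert (k - j) (op_supp L))" using assms by (simp add: laurent_op_def)
  have "op_mult s L (op_monom c j) k = (\<Sum>i\<in>insert (k - j) (op_supp L). if i = k - j then L i * sp i c else 0)"
    by (subst op_mult_eq_sum_over[OF f]) (auto intro: sum.cong simp: op_monom_def)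
  also have "\<dots> = L (k - j) * sp (k - j) c" using f by (simp add: sum.delta')
  finally show "op_mult s L (op_monom c j) k = L (k - j) * sp (k - j) c" .
qed

lemma op_monom_1_0: "op_monom 1 0 = op_one"
  by (simp add: fun_eq_iff op_coeff_simps op_monom_def op_one_def)

lemma op_mult_one [simp]: "op_mult s op_one M = M"
  using op_mult_monom_left[of 1 0 M] by (simp add: op_monom_1_0)

lemma op_mult_one_right [simp]: "laurent_op L \<Longrightarrow> op_mult s L op_one = L"
  using op_mult_monom_right[of L 1 0] by (simp add: op_monom_1_0)

lemma op_mult_monom_monom: "op_mult s (op_monom a k) (op_monom b l) = op_monom (a * sp k b) (k + l)"
  unfolding op_mult_monom_left by (auto simp: op_monom_def)

lemma op_mult_add_right: "op_mult s L (op_add M N) = op_add (op_mult s L M) (op_mult s L N)"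
  by (simp add: fun_eq_iff op_coeff_simps op_mult_def sp_add distrib_left sum.distrib)

lemma op_mult_add_left:
  assumes "laurent_op L" "laurent_op M"
  shows "op_mult s (op_add L M) N = op_add (op_mult s L N) (op_mult s M N)"
proof
  fix k
  let ?U = "op_supp L \<union> op_supp M"
  have f: "finite ?U" using assms by (simp add: laurent_op_def)
  have "op_mult s (op_add L M) N k = (\<Sum>i\<in>?U. (L i + M i) * sp i (N (k - i)))"
    using op_mult_eq_sum_over[OF f, of "op_add L M"] by (force simp: op_supp_def op_add_apply)
  also have "\<dots> = op_mult s L N k + op_mult s M N k"
    using op_mult_eq_sum_over[OF f, of L] op_mult_eq_sum_over[OF f, of M]
    by (simp add: distrib_right sum.distrib)
  finally show "op_mult s (op_add L M) N k = op_add (op_mult s L N) (op_mult s M N) k"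
    by (simp add: op_add_apply)
qed

lemma op_mult_neg_left: "op_mult s (op_neg L) M = op_neg (op_mult s L M)"
  by (simp add: fun_eq_iff op_coeff_simps op_mult_def op_supp_def sum_negf)

lemma op_mult_neg_right: "op_mult s L (op_neg M) = op_neg (op_mult s L M)"
  by (simp add: fun_eq_iff op_coeff_simps op_mult_def sp_uminus sum_negf)

lemma op_mult_sum_right: "op_mult s L (op_sum F J) = op_sum (\<lambda>j. op_mult s L (F j)) J"
  by (simp add: fun_eq_iff op_coeff_simps op_mult_def sp_sum sum_distrib_left sum.swap[of _ J])

lemma op_mult_sum_left:
  assumes "finite J" "\<And>j. j \<in> J \<Longrightarrow> laurent_op (F j)"
  shows "op_mult s (op_sum F J) M = op_sum (\<lambda>j. op_mult s (F j) M) J"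
proof
  fix k
  let ?U = "\<Union>j\<in>J. op_supp (F j)"
  have f: "finite ?U" using assms by (simp add: laurent_op_def)
  have "op_mult s (op_sum F J) M k = (\<Sum>j\<in>J. \<Sum>i\<in>?U. F j i * sp i (M (k - i)))"
    by (simp add: op_mult_eq_sum_over[OF f op_supp_sum] op_sum_apply sum_distrib_right sum.swap[of _ ?U])
  also have "\<dots> = (\<Sum>j\<in>J. op_mult s (F j) M k)"
    by (intro sum.cong refl op_mult_eq_sum_over[symmetric, OF f]) auto
  finally show "op_mult s (op_sum F J) M k = op_sum (\<lambda>j. op_mult s (F j) M) J k"
    by (simp add: op_sum_apply)
qed

lemma op_apply_zero [simp]: "op_apply s op_zero f = 0"
  by (simp add: op_apply_def op_supp_def op_zero_apply)

lemma op_apply_one [simp]: "op_apply s op_one f = f"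
proof -
  have "op_supp (op_one :: 'k op) \<subseteq> {0}" by (auto simp: op_supp_def op_one_def)
  then show ?thesis by (subst op_apply_eq_sum_over[of "{0}"]) (auto simp: op_one_def)
qed

lemma op_apply_sum:
  assumes "finite J" "\<And>j. j \<in> J \<Longrightarrow> laurent_op (F j)"
  shows "op_apply s (op_sum F J) f = (\<Sum>j\<in>J. op_apply s (F j) f)"
proof -
  let ?U = "\<Union>j\<in>J. op_supp (F j)"
  have fin: "finite ?U" using assms by (simp add: laurent_op_def)
  have "op_apply s (op_sum F J) f = (\<Sum>j\<in>J. \<Sum>i\<in>?U. F j i * sp i f)"
    by (simp add: op_apply_eq_sum_over[OF fin op_supp_sum] op_sum_apply sum_distrib_right sum.swap[of _ ?U])
  also have "\<dots> = (\<Sum>j\<in>J. op_apply s (F j) f)"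
    by (intro sum.cong refl op_apply_eq_sum_over[symmetric, OF fin]) auto
  finally show ?thesis .
qed

lemma op_apply_sum_right: "op_apply s L (\<Sum>j\<in>J. g j) = (\<Sum>j\<in>J. op_apply s L (g j))"
  by (simp add: op_apply_def sp_sum sum_distrib_left sum.swap[of _ "op_supp L"])

end

section \<open>Degree, division with remainder and the Ore condition\<close>

definition op_deg :: "'k::zero op \<Rightarrow> int" where
  "op_deg L = Max (op_supp L)"

lemma
  assumes "laurent_op L" "L \<noteq> op_zero"
  shows op_deg_coeff_nonzero: "L (op_deg L) \<noteq> 0"
    and coeff_above_op_deg: "op_deg L < i \<Longrightarrow> L i = 0"
proof -
  have f: "finite (op_supp L)" using assms(1) by (simp add: laurent_op_def)
  have ne: "op_supp L \<noteq> {}" using assms(2) by (auto simp: op_supp_def op_zero_def)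
  show "L (op_deg L) \<noteq> 0" using Max_in[OF f ne] by (simp add: op_deg_def op_supp_def)
  show "op_deg L < i \<Longrightarrow> L i = 0" using Max_ge[OF f, of i] by (force simp: op_deg_def op_supp_def)
qed

lemma op_degI:
  assumes "laurent_op L" "L d \<noteq> 0" "\<And>i. d < i \<Longrightarrow> L i = 0"
  shows "op_deg L = d"
proof -
  have "L \<noteq> op_zero" using assms(2) by (auto simp: op_zero_apply)
  then show ?thesis using op_deg_coeff_nonzero coeff_above_op_deg assms by (meson linorder_neqE)
qed

lemma op_deg_nonneg: "ore_op L \<Longrightarrow> L \<noteq> op_zero \<Longrightarrow> 0 \<le> op_deg L"
  by (metis op_deg_coeff_nonzero ore_op_laurent ore_op_neg_index not_le)

context field_automorphism
begin

lemma
  assumes "laurent_op L" "laurent_op M" "L \<noteq> op_zero" "M \<noteq> op_zero"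
  shows op_mult_nonzero: "op_mult s L M \<noteq> op_zero"
    and op_deg_mult: "op_deg (op_mult s L M) = op_deg L + op_deg M"
proof -
  let ?dL = "op_deg L" and ?dM = "op_deg M"
  have dL: "i \<in> op_supp L \<Longrightarrow> i \<le> ?dL" for i
    using coeff_above_op_deg[OF assms(1,3)] by (force simp: op_supp_def)
  have dM: "?dM < i \<Longrightarrow> M i = 0" for i using coeff_above_op_deg[OF assms(2,4)] .
  have top: "op_mult s L M (?dL + ?dM) = L ?dL * sp ?dL (M ?dM)"
  proof -
    have "op_mult s L M (?dL + ?dM) = (\<Sum>i\<in>op_supp L. if i = ?dL then L i * sp i (M ?dM) else 0)"
      unfolding op_mult_def
      by (rule sum.cong[OF refl]) (use dL dM in \<open>force simp: order.order_iff_strict\<close>)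
    then show ?thesis
      using op_supp_finite[OF assms(1)] op_deg_coeff_nonzero[OF assms(1,3)]
      by (simp add: sum.delta' in_op_supp_iff)
  qed
  have above: "op_mult s L M k = 0" if "?dL + ?dM < k" for k
    unfolding op_mult_def using dL dM that by (intro sum.neutral) force
  have nz: "op_mult s L M (?dL + ?dM) \<noteq> 0"
    using top op_deg_coeff_nonzero[OF assms(1,3)] op_deg_coeff_nonzero[OF assms(2,4)] by simp
  then show "op_mult s L M \<noteq> op_zero" by (auto simp: op_zero_apply)
  show "op_deg (op_mult s L M) = ?dL + ?dM"
    by (rule op_degI[OF laurent_op_mult[OF assms(1,2)] nz above])
qed

text \<open>Shared by left and right division: \<open>f\<close> is \<open>q \<mapsto> q d\<close> or \<open>q \<mapsto> d q\<close>.\<close>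
lemma ore_division:
  fixes f :: "'k op \<Rightarrow> 'k op"
  assumes f_add: "\<And>q q'. ore_op q \<Longrightarrow> ore_op q' \<Longrightarrow> f (op_add q q') = op_add (f q) (f q')"
    and f_ore: "\<And>q. ore_op q \<Longrightarrow> ore_op (f q)"
    and cancel_lead: "\<And>a. ore_op a \<Longrightarrow> a \<noteq> op_zero \<Longrightarrow> op_deg d \<le> op_deg a \<Longrightarrow>
       \<exists>q. ore_op q \<and> (\<forall>i. op_deg a \<le> i \<longrightarrow> f q i = a i)"
    and a: "ore_op a"
  shows "\<exists>q r. ore_op q \<and> ore_op r \<and> a = op_add (f q) r \<and> (r = op_zero \<or> op_deg r < op_deg d)"
  using a
proof (induction "nat (op_deg a)" arbitrary: a rule: less_induct)
  case less
  have "f op_zero x + f op_zero x = f op_zero x" for x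
    using fun_cong[OF f_add[of op_zero op_zero], of x] by (simp add: op_add_apply)
  then have "f op_zero x = 0" for x by (metis add_cancel_left_left)
  then have f_zero: "f op_zero = op_zero" by (simp add: fun_eq_iff op_coeff_simps)
  show ?case
  proof (cases "a = op_zero \<or> op_deg a < op_deg d")
    case True
    then show ?thesis using less.prems f_zero by (intro exI[of _ op_zero] exI[of _ a]) auto
  next
    case False
    then obtain q where q: "ore_op q" "\<And>i. op_deg a \<le> i \<Longrightarrow> f q i = a i"
      using cancel_lead[OF less.prems] by force
    define a' where "a' = op_add a (op_neg (f q))"
    have a': "ore_op a'" using less.prems f_ore[OF q(1)] by (simp add: a'_def)
    have "a' i = 0" if "op_deg a \<le> i" for i using q(2)[OF that] by (simp add: a'_def op_coeff_simps)
    then have "a' = op_zero \<or> op_deg a' < op_deg a"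
      using op_deg_coeff_nonzero[OF ore_op_laurent[OF a']] by (meson not_le)
    then have "nat (op_deg a') < nat (op_deg a)"
      if "a' \<noteq> op_zero" using that op_deg_nonneg[OF a'] by auto
    moreover have "\<exists>q r. ore_op q \<and> ore_op r \<and> op_zero = op_add (f q) r \<and> (r = op_zero \<or> op_deg r < op_deg d)"
      using f_zero by (intro exI[of _ op_zero]) auto
    ultimately obtain q' r where qr: "ore_op q'" "ore_op r" "a' = op_add (f q') r"
        "r = op_zero \<or> op_deg r < op_deg d"
      using less.hyps[OF _ a'] by (cases "a' = op_zero") auto
    have "a = op_add (f (op_add q' q)) r"
      using qr(3) f_add[OF qr(1) q(1)] by (simp add: fun_eq_iff op_coeff_simps a'_def algebra_simps)
    then show ?thesis using qr q(1) by (intro exI[of _ "op_add q' q"] exI[of _ r]) auto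
  qed
qed

lemma left_division:
  assumes "ore_op a" "ore_op d" "d \<noteq> op_zero"
  shows "\<exists>q r. ore_op q \<and> ore_op r \<and> a = op_add (op_mult s q d) r \<and> (r = op_zero \<or> op_deg r < op_deg d)"
proof (rule ore_division[where f = "\<lambda>q. op_mult s q d"])
  fix a :: "'k op" assume a: "ore_op a" "a \<noteq> op_zero" "op_deg d \<le> op_deg a"
  define e where "e = op_deg a - op_deg d"
  define q where "q = op_monom (a (op_deg a) / sp e (d (op_deg d))) e"
  have "op_mult s q d i = a i" if "op_deg a \<le> i" for i
  proof (cases "i = op_deg a")
    case True
    then show ?thesis using op_deg_coeff_nonzero[OF ore_op_laurent[OF assms(2)] assms(3)]
      by (simp add: q_def op_mult_monom_left e_def)
  next
    case False
    then show ?thesis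
      using that coeff_above_op_deg[OF ore_op_laurent[OF a(1)] a(2), of i]
        coeff_above_op_deg[OF ore_op_laurent[OF assms(2)] assms(3), of "i - e"]
      by (simp add: q_def op_mult_monom_left e_def)
  qed
  moreover have "ore_op q" using a(3) by (simp add: q_def e_def ore_op_monom)
  ultimately show "\<exists>q. ore_op q \<and> (\<forall>i. op_deg a \<le> i \<longrightarrow> op_mult s q d i = a i)" by blast
qed (use assms in \<open>simp_all add: op_mult_add_left ore_op_laurent\<close>)

lemma right_division:
  assumes "ore_op a" "ore_op d" "d \<noteq> op_zero"
  shows "\<exists>q r. ore_op q \<and> ore_op r \<and> a = op_add (op_mult s d q) r \<and> (r = op_zero \<or> op_deg r < op_deg d)"
proof (rule ore_division[where f = "\<lambda>q. op_mult s d q"])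
  fix a :: "'k op" assume a: "ore_op a" "a \<noteq> op_zero" "op_deg d \<le> op_deg a"
  define e where "e = op_deg a - op_deg d"
  define q where "q = op_monom (sp (- op_deg d) (a (op_deg a) / d (op_deg d))) e"
  have "op_mult s d q i = a i" if "op_deg a \<le> i" for i
  proof (cases "i = op_deg a")
    case True
    then show ?thesis using op_deg_coeff_nonzero[OF ore_op_laurent[OF assms(2)] assms(3)]
      by (simp add: q_def op_mult_monom_right[OF ore_op_laurent[OF assms(2)]] e_def sp_sp)
  next
    case False
    then show ?thesis
      using that coeff_above_op_deg[OF ore_op_laurent[OF a(1)] a(2), of i]
        coeff_above_op_deg[OF ore_op_laurent[OF assms(2)] assms(3), of "i - e"]
      by (simp add: q_def op_mult_monom_right[OF ore_op_laurent[OF assms(2)]] e_def)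
  qed
  moreover have "ore_op q" using a(3) by (simp add: q_def e_def ore_op_monom)
  ultimately show "\<exists>q. ore_op q \<and> (\<forall>i. op_deg a \<le> i \<longrightarrow> op_mult s d q i = a i)" by blast
qed (use assms in \<open>simp_all add: op_mult_add_right\<close>)

lemma left_ore_condition:
  assumes "ore_op a" "ore_op v" "v \<noteq> op_zero"
  shows "\<exists>x y. ore_op x \<and> ore_op y \<and> y \<noteq> op_zero \<and> op_mult s y a = op_mult s x v"
  using assms
proof (induction "nat (op_deg v)" arbitrary: a v rule: less_induct)
  case less
  obtain q r where qr: "ore_op q" "ore_op r" "a = op_add (op_mult s q v) r" "r = op_zero \<or> op_deg r < op_deg v"
    using left_division[OF less.prems] by blast
  show ?case
  proof (cases "r = op_zero")
    case True
    then show ?thesis using qr by (intro exI[of _ q] exI[of _ op_one]) simp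
  next
    case False
    have "nat (op_deg r) < nat (op_deg v)" using qr(4) False op_deg_nonneg[OF qr(2) False] by linarith
    then obtain x y where xy: "ore_op x" "ore_op y" "y \<noteq> op_zero" "op_mult s y v = op_mult s x r"
      using less.hyps[OF _ less.prems(2) qr(2) False] by blast
    have lx: "laurent_op x" and lq: "laurent_op q" using xy(1) qr(1) by (simp_all add: ore_op_laurent)
    have x: "x \<noteq> op_zero"
      using xy(4) op_mult_nonzero[OF ore_op_laurent[OF xy(2)] ore_op_laurent[OF less.prems(2)] xy(3) less.prems(3)]
      by auto
    have "op_mult s x a = op_add (op_mult s (op_mult s x q) v) (op_mult s y v)"
      using qr(3) xy(4) by (simp add: op_mult_add_right op_mult_assoc[OF lx lq])
    also have "\<dots> = op_mult s (op_add (op_mult s x q) y) v"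
      using xy(2) lx lq by (simp add: op_mult_add_left ore_op_laurent)
    finally show ?thesis using xy x qr(1)
      by (intro exI[of _ "op_add (op_mult s x q) y"] exI[of _ x]) auto
  qed
qed

lemma common_left_multiple:
  assumes "finite I" "\<And>i. i \<in> I \<Longrightarrow> ore_op (z i)"
    "\<And>i. i \<in> I \<Longrightarrow> ore_op (v i)" "\<And>i. i \<in> I \<Longrightarrow> v i \<noteq> op_zero"
  shows "\<exists>c g. ore_op c \<and> c \<noteq> op_zero \<and> (\<forall>i\<in>I. ore_op (g i) \<and> op_mult s c (z i) = op_mult s (g i) (v i))"
  using assms
proof (induction I rule: finite_induct)
  case empty
  show ?case using ore_op_one op_one_neq_zero by blast
next
  case (insert i0 I)
  obtain c g where cg: "ore_op c" "c \<noteq> op_zero" "\<forall>i\<in>I. ore_op (g i) \<and> op_mult s c (z i) = op_mult s (g i) (v i)"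
    using insert.IH insert.prems by blast
  obtain x y where xy: "ore_op x" "ore_op y" "y \<noteq> op_zero"
      "op_mult s y (op_mult s c (z i0)) = op_mult s x (v i0)"
    using left_ore_condition[of "op_mult s c (z i0)" "v i0"] cg(1) insert.prems by auto
  have assoc: "op_mult s (op_mult s y c) M = op_mult s y (op_mult s c M)" for M
    using xy(2) cg(1) by (simp add: op_mult_assoc ore_op_laurent)
  define g' where "g' i = (if i = i0 then x else op_mult s y (g i))" for i
  have "ore_op (g' i) \<and> op_mult s (op_mult s y c) (z i) = op_mult s (g' i) (v i)" if "i \<in> insert i0 I" for i
    using that xy cg(3) by (auto simp: g'_def assoc op_mult_assoc ore_op_laurent)
  moreover have "op_mult s y c \<noteq> op_zero"
    using op_mult_nonzero[OF ore_op_laurent[OF xy(2)] ore_op_laurent[OF cg(1)] xy(3) cg(2)] .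
  ultimately show ?case using xy cg by (intro exI[of _ "op_mult s y c"] exI[of _ g']) auto
qed

end

lemma mat_eq_refl [simp]: "mat_eq A A m n"
  by (simp add: mat_eq_def)
lemma mat_eq_sym: "mat_eq A B m n \<Longrightarrow> mat_eq B A m n"
  by (simp add: mat_eq_def)
lemma mat_eq_trans: "mat_eq A B m n \<Longrightarrow> mat_eq B C m n \<Longrightarrow> mat_eq A C m n"
  by (simp add: mat_eq_def)

lemma mat_mult_entry: "mat_mult s A B k i j = op_sum (\<lambda>h. op_mult s (A i h) (B h j)) {..<k}"
  by (simp add: mat_mult_def op_sum_def)

lemma mat_mult_cong_left: "mat_eq A A' m k \<Longrightarrow> mat_eq (mat_mult s A B k) (mat_mult s A' B k) m n"
  by (simp add: mat_eq_def mat_mult_def)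
lemma mat_mult_cong_right: "mat_eq B B' k n \<Longrightarrow> mat_eq (mat_mult s A B k) (mat_mult s A B' k) m n"
  by (simp add: mat_eq_def mat_mult_def)

lemma mat_apply_cong: "(\<And>j. j < n \<Longrightarrow> y j = y' j) \<Longrightarrow> mat_apply s A n y i = mat_apply s A n y' i"
  by (simp add: mat_apply_def)
lemma mat_apply_cong_mat:
  "(\<And>j. j < n \<Longrightarrow> A i j = A' i j) \<Longrightarrow> mat_apply s A n y i = mat_apply s A' n y i"
  by (simp add: mat_apply_def)

lemma ore_mat_laurent: "ore_mat A m n \<Longrightarrow> laurent_mat A m n"
  by (simp add: ore_mat_def laurent_mat_def ore_op_laurent)
lemma laurent_mat_id [simp]: "laurent_mat mat_id m m"
  by (simp add: laurent_mat_def mat_id_def)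
lemma ore_mat_id [simp]: "ore_mat mat_id m m"
  by (simp add: ore_mat_def mat_id_def)

context field_automorphism
begin

lemma laurent_mat_mult:
  "laurent_mat A m k \<Longrightarrow> laurent_mat B k n \<Longrightarrow> laurent_mat (mat_mult s A B k) m n"
  unfolding laurent_mat_def mat_mult_entry by (auto intro!: laurent_op_sum laurent_op_mult)
lemma ore_mat_mult: "ore_mat A m k \<Longrightarrow> ore_mat B k n \<Longrightarrow> ore_mat (mat_mult s A B k) m n"
  unfolding ore_mat_def mat_mult_entry by (auto intro!: ore_op_sum ore_op_mult)

lemma mat_mult_assoc:
  assumes "laurent_mat A m k" "laurent_mat B k l"
  shows "mat_eq (mat_mult s (mat_mult s A B k) C l) (mat_mult s A (mat_mult s B C l) k) m n"
  unfolding mat_eq_def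
proof (intro allI impI)
  fix i j assume "i < m" "j < n"
  then have lA: "\<And>h. h < k \<Longrightarrow> laurent_op (A i h)" and lB: "\<And>h g. h < k \<Longrightarrow> g < l \<Longrightarrow> laurent_op (B h g)"
    using assms by (auto simp: laurent_mat_def)
  have "mat_mult s (mat_mult s A B k) C l i j
      = op_sum (\<lambda>g. op_sum (\<lambda>h. op_mult s (A i h) (op_mult s (B h g) (C g j))) {..<k}) {..<l}"
    unfolding mat_mult_entry
    by (intro op_sum_cong, subst op_mult_sum_left) (use lA lB in \<open>auto intro!: op_sum_cong op_mult_assoc\<close>)
  also have "\<dots> = mat_mult s A (mat_mult s B C l) k i j"
    unfolding mat_mult_entry by (simp add: op_mult_sum_right op_sum_swap[of _ "{..<l}"])
  finally show "mat_mult s (mat_mult s A B k) C l i j = mat_mult s A (mat_mult s B C l) k i j" .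
qed

lemma mat_id_mult: "mat_eq (mat_mult s mat_id A m) A m n"
proof -
  have "mat_mult s mat_id A m i j = A i j" if "i < m" for i j
  proof -
    have "mat_mult s mat_id A m i j = op_sum (\<lambda>h. if h = i then A h j else op_zero) {..<m}"
      unfolding mat_mult_entry by (rule op_sum_cong) (auto simp: mat_id_def)
    then show ?thesis using that by (simp add: op_sum_delta)
  qed
  then show ?thesis by (simp add: mat_eq_def)
qed

lemma mat_mult_id:
  assumes "laurent_mat A m n" shows "mat_eq (mat_mult s A mat_id n) A m n"
proof -
  have "mat_mult s A mat_id n i j = A i j" if "i < m" "j < n" for i j
  proof -
    have "mat_mult s A mat_id n i j = op_sum (\<lambda>h. if h = j then A i h else op_zero) {..<n}"
      unfolding mat_mult_entry
      by (rule op_sum_cong) (use assms that in \<open>auto simp: mat_id_def laurent_mat_def\<close>)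
    then show ?thesis using that by (simp add: op_sum_delta)
  qed
  then show ?thesis by (simp add: mat_eq_def)
qed

lemma mat_apply_mult:
  assumes "laurent_mat A m k" "laurent_mat B k l" "i < m"
  shows "mat_apply s (mat_mult s A B k) l y i = mat_apply s A k (mat_apply s B l y) i"
proof -
  have "mat_apply s (mat_mult s A B k) l y i
      = (\<Sum>g<l. \<Sum>h<k. op_apply s (A i h) (op_apply s (B h g) (y g)))"
    unfolding mat_apply_def mat_mult_entry
    by (intro sum.cong refl, subst op_apply_sum)
      (use assms in \<open>auto simp: laurent_mat_def intro!: sum.cong op_apply_mult\<close>)
  also have "\<dots> = mat_apply s A k (mat_apply s B l y) i"
    by (simp add: mat_apply_def op_apply_sum_right sum.swap[of _ "{..<l}"])
  finally show ?thesis .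
qed

lemma mat_apply_id:
  assumes "i < n" shows "mat_apply s mat_id n y i = y i"
proof -
  have "mat_apply s mat_id n y i = (\<Sum>j<n. if j = i then y j else 0)"
    unfolding mat_apply_def by (rule sum.cong) (auto simp: mat_id_def)
  then show ?thesis using assms by (simp add: sum.delta)
qed

lemma mat_apply_inverse:
  assumes "laurent_mat P m m" "laurent_mat P' m m" "mat_eq (mat_mult s P P' m) mat_id m m" "i < m"
  shows "mat_apply s P m (mat_apply s P' m y) i = y i"
proof -
  have "mat_apply s P m (mat_apply s P' m y) i = mat_apply s (mat_mult s P P' m) m y i"
    by (rule mat_apply_mult[OF assms(1,2,4), symmetric])
  also have "\<dots> = mat_apply s mat_id m y i"
    by (rule mat_apply_cong_mat) (use assms(3,4) in \<open>auto simp: mat_eq_def\<close>)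
  finally show ?thesis using mat_apply_id[OF assms(4)] by simp
qed

lemma mat_apply_cancel_left:
  assumes "laurent_mat Pv m m" "laurent_mat P m m" "mat_eq (mat_mult s Pv P m) mat_id m m"
    and Px: "\<And>i. i < m \<Longrightarrow> mat_apply s P m x i = mat_apply s P m x' i" and i: "i < m"
  shows "x i = x' i"
proof -
  have "x i = mat_apply s Pv m (mat_apply s P m x) i"
    by (rule mat_apply_inverse[OF assms(1-3) i, symmetric])
  also have "\<dots> = mat_apply s Pv m (mat_apply s P m x') i"
    by (rule mat_apply_cong) (rule Px)
  also have "\<dots> = x' i"
    by (rule mat_apply_inverse[OF assms(1-3) i])
  finally show ?thesis .
qed

lemma mat_mult_cancel_right:
  assumes "laurent_mat B m n" "laurent_mat Q n n" "mat_eq (mat_mult s Q Qv n) mat_id n n"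
  shows "mat_eq (mat_mult s (mat_mult s B Q n) Qv n) B m n"
proof -
  have "mat_eq (mat_mult s (mat_mult s B Q n) Qv n) (mat_mult s B (mat_mult s Q Qv n) n) m n"
    by (rule mat_mult_assoc[OF assms(1,2)])
  moreover have "mat_eq (mat_mult s B (mat_mult s Q Qv n) n) (mat_mult s B mat_id n) m n"
    by (rule mat_mult_cong_right[OF assms(3)])
  ultimately show ?thesis using mat_mult_id[OF assms(1)] by (meson mat_eq_trans)
qed

lemma mat_mult_cancel_left:
  assumes "laurent_mat Pv m m" "laurent_mat P m m" "mat_eq (mat_mult s Pv P m) mat_id m m"
  shows "mat_eq (mat_mult s Pv (mat_mult s P A m) m) A m n"
proof -
  have "mat_eq (mat_mult s Pv (mat_mult s P A m) m) (mat_mult s (mat_mult s Pv P m) A m) m n"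
    by (rule mat_eq_sym, rule mat_mult_assoc[OF assms(1,2)])
  moreover have "mat_eq (mat_mult s (mat_mult s Pv P m) A m) (mat_mult s mat_id A m) m n"
    by (rule mat_mult_cong_left[OF assms(3)])
  ultimately show ?thesis using mat_id_mult[of A m n] by (meson mat_eq_trans)
qed

definition laurent_inverses :: "'k opmat \<Rightarrow> 'k opmat \<Rightarrow> nat \<Rightarrow> bool" where
  "laurent_inverses P Pv m \<longleftrightarrow> laurent_mat P m m \<and> laurent_mat Pv m m \<and> is_inverse s P Pv m"

definition ore_inverses :: "'k opmat \<Rightarrow> 'k opmat \<Rightarrow> nat \<Rightarrow> bool" where
  "ore_inverses P Pv m \<longleftrightarrow> ore_mat P m m \<and> ore_mat Pv m m \<and> is_inverse s P Pv m"

lemma ore_inverses_laurent: "ore_inverses P Pv m \<Longrightarrow> laurent_inverses P Pv m"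
  by (simp add: ore_inverses_def laurent_inverses_def ore_mat_laurent)

lemma laurent_inverses_unimodular: "laurent_inverses P Pv m \<Longrightarrow> unimodular_laurent s P m"
  by (auto simp: laurent_inverses_def unimodular_laurent_def)

lemma ore_inverses_id: "ore_inverses mat_id mat_id m"
  by (simp add: ore_inverses_def is_inverse_def mat_id_mult)

lemma mat_mult_right_inverses:
  assumes "laurent_mat P m m" "laurent_mat Pv m m" "laurent_mat P' m m" "laurent_mat Pv' m m"
    "mat_eq (mat_mult s P Pv m) mat_id m m" "mat_eq (mat_mult s P' Pv' m) mat_id m m"
  shows "mat_eq (mat_mult s (mat_mult s P' P m) (mat_mult s Pv Pv' m) m) mat_id m m"
proof -
  have "mat_eq (mat_mult s (mat_mult s P' P m) (mat_mult s Pv Pv' m) m)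
               (mat_mult s P' (mat_mult s P (mat_mult s Pv Pv' m) m) m) m m"
    using mat_mult_assoc assms by blast
  moreover have "mat_eq (mat_mult s P' (mat_mult s P (mat_mult s Pv Pv' m) m) m)
                        (mat_mult s P' (mat_mult s (mat_mult s P Pv m) Pv' m) m) m m"
    by (rule mat_mult_cong_right, rule mat_eq_sym, rule mat_mult_assoc) (use assms in auto)
  moreover have "mat_eq (mat_mult s P' (mat_mult s (mat_mult s P Pv m) Pv' m) m)
                        (mat_mult s P' (mat_mult s mat_id Pv' m) m) m m"
    by (intro mat_mult_cong_right mat_mult_cong_left) (use assms in auto)
  moreover have "mat_eq (mat_mult s P' (mat_mult s mat_id Pv' m) m) (mat_mult s P' Pv' m) m m"
    by (intro mat_mult_cong_right mat_id_mult)
  ultimately show ?thesis using assms(6) by (meson mat_eq_trans)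
qed

lemma laurent_inverses_mult:
  "laurent_inverses P Pv m \<Longrightarrow> laurent_inverses P' Pv' m \<Longrightarrow>
   laurent_inverses (mat_mult s P' P m) (mat_mult s Pv Pv' m) m"
  unfolding laurent_inverses_def is_inverse_def
  by (auto intro: laurent_mat_mult mat_mult_right_inverses)

lemma ore_inverses_mult:
  assumes "ore_inverses P Pv m" "ore_inverses P' Pv' m"
  shows "ore_inverses (mat_mult s P' P m) (mat_mult s Pv Pv' m) m"
  using laurent_inverses_mult[OF ore_inverses_laurent[OF assms(1)] ore_inverses_laurent[OF assms(2)]] assms
  unfolding ore_inverses_def laurent_inverses_def by (auto intro: ore_mat_mult)

end

section \<open>Reduction to diagonal form\<close>

definition swap_index :: "nat \<Rightarrow> nat \<Rightarrow> nat \<Rightarrow> nat" where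
  "swap_index a b i = (if i = a then b else if i = b then a else i)"

lemma swap_index_swap_index [simp]: "swap_index a b (swap_index a b i) = i"
  by (simp add: swap_index_def)
lemma swap_index_less: "a < M \<Longrightarrow> b < M \<Longrightarrow> i < M \<Longrightarrow> swap_index a b i < M"
  by (simp add: swap_index_def)
lemma eq_swap_index_iff: "j = swap_index a b h \<longleftrightarrow> h = swap_index a b j"
  by (auto simp: swap_index_def)

definition swap_mat :: "nat \<Rightarrow> nat \<Rightarrow> 'k::{zero,one} opmat" where
  "swap_mat a b = (\<lambda>i j. if j = swap_index a b i then op_one else op_zero)"

definition row_elim_mat :: "(nat \<Rightarrow> 'k::{zero,one} op) \<Rightarrow> 'k opmat" where
  "row_elim_mat q = (\<lambda>i j. if i = j then op_one else if j = 0 \<and> 0 < i then q i else op_zero)"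

definition col_elim_mat :: "(nat \<Rightarrow> 'k::{zero,one} op) \<Rightarrow> 'k opmat" where
  "col_elim_mat q = (\<lambda>i j. if i = j then op_one else if i = 0 \<and> 0 < j then q j else op_zero)"

lemma ore_mat_swap_mat: "ore_mat (swap_mat a b) M M"
  by (simp add: ore_mat_def swap_mat_def)
lemma ore_mat_row_elim_mat: "(\<And>i. 0 < i \<Longrightarrow> i < M \<Longrightarrow> ore_op (q i)) \<Longrightarrow> ore_mat (row_elim_mat q) M M"
  by (simp add: ore_mat_def row_elim_mat_def)
lemma ore_mat_col_elim_mat: "(\<And>i. 0 < i \<Longrightarrow> i < M \<Longrightarrow> ore_op (q i)) \<Longrightarrow> ore_mat (col_elim_mat q) M M"
  by (simp add: ore_mat_def col_elim_mat_def)

text \<open>Operator matrices are total functions whose entries outside the dimensions are junk, so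
  the target properties of a reduction must respect \<open>mat_eq\<close>.\<close>
definition mat_eq_invariant :: "('k opmat \<Rightarrow> bool) \<Rightarrow> nat \<Rightarrow> nat \<Rightarrow> bool" where
  "mat_eq_invariant \<Phi> M N \<longleftrightarrow> (\<forall>B B'. mat_eq B B' M N \<longrightarrow> \<Phi> B \<longrightarrow> \<Phi> B')"

context field_automorphism
begin

lemma swap_mat_mult:
  assumes "a < M" "b < M" "i < M"
  shows "mat_mult s (swap_mat a b) A M i j = A (swap_index a b i) j"
proof -
  have "mat_mult s (swap_mat a b) A M i j = op_sum (\<lambda>h. if h = swap_index a b i then A h j else op_zero) {..<M}"
    unfolding mat_mult_entry by (rule op_sum_cong) (auto simp: swap_mat_def)
  then show ?thesis using assms swap_index_less by (simp add: op_sum_delta)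
qed

lemma mat_mult_swap_mat:
  assumes "a < N" "b < N" "j < N" "\<And>h. h < N \<Longrightarrow> laurent_op (A i h)"
  shows "mat_mult s A (swap_mat a b) N i j = A i (swap_index a b j)"
proof -
  have "mat_mult s A (swap_mat a b) N i j = op_sum (\<lambda>h. if h = swap_index a b j then A i h else op_zero) {..<N}"
    unfolding mat_mult_entry
    by (rule op_sum_cong) (use assms(4) in \<open>auto simp: swap_mat_def eq_swap_index_iff\<close>)
  then show ?thesis using assms swap_index_less by (simp add: op_sum_delta)
qed

lemma ore_inverses_swap_mat:
  assumes "a < M" "b < M" shows "ore_inverses (swap_mat a b) (swap_mat a b) M"
proof -
  have "mat_eq (mat_mult s (swap_mat a b) (swap_mat a b) M) mat_id M M"
    using swap_mat_mult[OF assms] by (auto simp: mat_eq_def swap_mat_def mat_id_def)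
  then show ?thesis by (simp add: ore_inverses_def is_inverse_def ore_mat_swap_mat)
qed

lemma row_elim_mat_mult:
  assumes "i < M" "0 < M"
  shows "mat_mult s (row_elim_mat q) A M i j =
    (if i = 0 then A 0 j else op_add (A i j) (op_mult s (q i) (A 0 j)))"
proof (cases "i = 0")
  case True
  have "mat_mult s (row_elim_mat q) A M i j = op_sum (\<lambda>h. if h = i then A h j else op_zero) {..<M}"
    unfolding mat_mult_entry by (rule op_sum_cong) (use True in \<open>auto simp: row_elim_mat_def\<close>)
  then show ?thesis using True assms by (simp add: op_sum_delta)
next
  case False
  have "mat_mult s (row_elim_mat q) A M i j d
      = (\<Sum>h<M. (if h = i then A h j d else 0) + (if h = 0 then op_mult s (q i) (A 0 j) d else 0))" for d
    unfolding mat_mult_entry op_sum_apply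
    by (rule sum.cong) (use False in \<open>auto simp: row_elim_mat_def op_coeff_simps\<close>)
  then show ?thesis using False assms by (simp add: fun_eq_iff op_coeff_simps sum.distrib)
qed

lemma mat_mult_col_elim_mat:
  assumes "j < N" "0 < N" "\<And>h. h < N \<Longrightarrow> laurent_op (A i h)"
  shows "mat_mult s A (col_elim_mat q) N i j =
    (if j = 0 then A i 0 else op_add (A i j) (op_mult s (A i 0) (q j)))"
proof (cases "j = 0")
  case True
  have "mat_mult s A (col_elim_mat q) N i j = op_sum (\<lambda>h. if h = j then A i h else op_zero) {..<N}"
    unfolding mat_mult_entry by (rule op_sum_cong) (use True assms in \<open>auto simp: col_elim_mat_def\<close>)
  then show ?thesis using True assms by (simp add: op_sum_delta)
next
  case False
  have "mat_mult s A (col_elim_mat q) N i j d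
      = (\<Sum>h<N. (if h = j then A i h d else 0) + (if h = 0 then op_mult s (A i 0) (q j) d else 0))" for d
    unfolding mat_mult_entry op_sum_apply
    by (rule sum.cong) (use False assms in \<open>auto simp: col_elim_mat_def op_coeff_simps\<close>)
  then show ?thesis using False assms by (simp add: fun_eq_iff op_coeff_simps sum.distrib)
qed

lemma ore_inverses_row_elim_mat:
  assumes "\<And>i. 0 < i \<Longrightarrow> i < M \<Longrightarrow> ore_op (q i)" "0 < M"
  shows "ore_inverses (row_elim_mat q) (row_elim_mat (\<lambda>i. op_neg (q i))) M"
proof -
  have "mat_eq (mat_mult s (row_elim_mat q) (row_elim_mat (\<lambda>i. op_neg (q i))) M) mat_id M M"
    using assms row_elim_mat_mult[OF _ assms(2), of _ q]
    by (auto simp: mat_eq_def row_elim_mat_def mat_id_def ore_op_laurent)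
  moreover have "mat_eq (mat_mult s (row_elim_mat (\<lambda>i. op_neg (q i))) (row_elim_mat q) M) mat_id M M"
    using assms row_elim_mat_mult[OF _ assms(2), of _ "\<lambda>i. op_neg (q i)"]
    by (auto simp: mat_eq_def row_elim_mat_def mat_id_def ore_op_laurent op_mult_neg_left)
  ultimately show ?thesis using assms
    by (simp add: ore_inverses_def is_inverse_def ore_mat_row_elim_mat)
qed

lemma ore_inverses_col_elim_mat:
  assumes "\<And>i. 0 < i \<Longrightarrow> i < N \<Longrightarrow> ore_op (q i)" "0 < N"
  shows "ore_inverses (col_elim_mat q) (col_elim_mat (\<lambda>i. op_neg (q i))) N"
proof -
  have "mat_eq (mat_mult s (col_elim_mat q') (col_elim_mat q'') N) mat_id N N"
    if "\<And>i. 0 < i \<Longrightarrow> i < N \<Longrightarrow> q'' i = op_neg (q' i)" "\<And>i. 0 < i \<Longrightarrow> i < N \<Longrightarrow> ore_op (q' i)"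
    for q' q''
    unfolding mat_eq_def
  proof (intro allI impI)
    fix i j assume ij: "i < N" "j < N"
    have "\<And>h. h < N \<Longrightarrow> laurent_op (col_elim_mat q' i h)"
      using that(2) by (auto simp: col_elim_mat_def ore_op_laurent)
    then show "mat_mult s (col_elim_mat q') (col_elim_mat q'') N i j = mat_id i j"
      using that ij mat_mult_col_elim_mat[OF ij(2) assms(2)]
      by (auto simp: col_elim_mat_def mat_id_def fun_eq_iff op_coeff_simps)
  qed
  from this[of q] this[of "\<lambda>i. op_neg (q i)" q] show ?thesis using assms
    by (simp add: ore_inverses_def is_inverse_def ore_mat_col_elim_mat fun_eq_iff op_coeff_simps)
qed

definition reduces_to :: "'k opmat \<Rightarrow> nat \<Rightarrow> nat \<Rightarrow> ('k opmat \<Rightarrow> bool) \<Rightarrow> bool" where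
  "reduces_to A M N \<Phi> \<longleftrightarrow>
     (\<exists>P Pv Q Qv. ore_inverses P Pv M \<and> ore_inverses Q Qv N \<and> \<Phi> (mat_mult s (mat_mult s P A M) Q N))"

lemma reduces_toI:
  assumes "ore_mat A M N" "mat_eq_invariant \<Phi> M N" "\<Phi> A"
  shows "reduces_to A M N \<Phi>"
proof -
  have "laurent_mat (mat_mult s mat_id A M) M N"
    using assms(1) by (intro laurent_mat_mult ore_mat_laurent) auto
  then have "mat_eq A (mat_mult s (mat_mult s mat_id A M) mat_id N) M N"
    using mat_mult_id mat_id_mult[of A M N] by (meson mat_eq_sym mat_eq_trans)
  then show ?thesis
    using assms(2,3) ore_inverses_id unfolding mat_eq_invariant_def reduces_to_def by blast
qed

lemma reduces_to_trans:
  assumes "ore_mat A M N" "ore_inverses P1 Pv1 M" "ore_inverses Q1 Qv1 N"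
    "mat_eq B (mat_mult s (mat_mult s P1 A M) Q1 N) M N" "reduces_to B M N \<Phi>" "mat_eq_invariant \<Phi> M N"
  shows "reduces_to A M N \<Phi>"
proof -
  obtain P2 Pv2 Q2 Qv2 where r: "ore_inverses P2 Pv2 M" "ore_inverses Q2 Qv2 N"
      "\<Phi> (mat_mult s (mat_mult s P2 B M) Q2 N)"
    using assms(5) unfolding reduces_to_def by blast
  have l: "laurent_mat P2 M M" "laurent_mat P1 M M" "laurent_mat A M N" "laurent_mat Q1 N N" "laurent_mat Q2 N N"
    using r assms by (auto simp: ore_inverses_def ore_mat_laurent)
  let ?X = "mat_mult s P2 (mat_mult s P1 A M) M"
  have lX: "laurent_mat ?X M N" using l by (intro laurent_mat_mult)
  have "mat_eq (mat_mult s (mat_mult s P2 B M) Q2 N)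
               (mat_mult s (mat_mult s P2 (mat_mult s (mat_mult s P1 A M) Q1 N) M) Q2 N) M N"
    by (intro mat_mult_cong_left mat_mult_cong_right assms(4))
  moreover have "mat_eq (mat_mult s (mat_mult s P2 (mat_mult s (mat_mult s P1 A M) Q1 N) M) Q2 N)
                        (mat_mult s (mat_mult s ?X Q1 N) Q2 N) M N"
    by (rule mat_mult_cong_left, rule mat_eq_sym, rule mat_mult_assoc) (use l laurent_mat_mult in auto)
  moreover have "mat_eq (mat_mult s (mat_mult s ?X Q1 N) Q2 N) (mat_mult s ?X (mat_mult s Q1 Q2 N) N) M N"
    by (rule mat_mult_assoc) (use l lX in auto)
  moreover have "mat_eq (mat_mult s ?X (mat_mult s Q1 Q2 N) N)
                        (mat_mult s (mat_mult s (mat_mult s P2 P1 M) A M) (mat_mult s Q1 Q2 N) N) M N"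
    by (rule mat_mult_cong_left, rule mat_eq_sym, rule mat_mult_assoc) (use l in auto)
  ultimately have "\<Phi> (mat_mult s (mat_mult s (mat_mult s P2 P1 M) A M) (mat_mult s Q1 Q2 N) N)"
    using r(3) assms(6) unfolding mat_eq_invariant_def by (meson mat_eq_trans)
  then show ?thesis unfolding reduces_to_def
    using ore_inverses_mult[OF assms(2) r(1)] ore_inverses_mult[OF r(2) assms(3)] by blast
qed

lemma reduces_to_mult_left:
  assumes "ore_mat A M N" "ore_inverses P Pv M" "reduces_to (mat_mult s P A M) M N \<Phi>" "mat_eq_invariant \<Phi> M N"
  shows "reduces_to A M N \<Phi>"
proof (rule reduces_to_trans[OF assms(1,2) ore_inverses_id _ assms(3,4)])
  have "ore_mat (mat_mult s P A M) M N" using assms(1,2) by (intro ore_mat_mult) (simp add: ore_inverses_def)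
  from mat_mult_id[OF ore_mat_laurent[OF this]]
  show "mat_eq (mat_mult s P A M) (mat_mult s (mat_mult s P A M) mat_id N) M N"
    by (rule mat_eq_sym)
qed

lemma reduces_to_mult_right:
  assumes "ore_mat A M N" "ore_inverses Q Qv N" "reduces_to (mat_mult s A Q N) M N \<Phi>" "mat_eq_invariant \<Phi> M N"
  shows "reduces_to A M N \<Phi>"
  by (rule reduces_to_trans[OF assms(1) ore_inverses_id assms(2) _ assms(3,4)])
     (simp add: mat_eq_sym mat_mult_cong_left mat_id_mult)

end

lemma choice_pair:
  assumes "\<forall>i. P i \<longrightarrow> (\<exists>x y. Q i x y)"
  obtains f g where "\<And>i. P i \<Longrightarrow> Q i (f i) (g i)"
proof -
  have "\<forall>i. \<exists>x. P i \<longrightarrow> (\<exists>y. Q i x y)" using assms by blast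
  from choice[OF this] obtain f where "\<forall>i. P i \<longrightarrow> (\<exists>y. Q i (f i) y)" ..
  then have "\<forall>i. \<exists>y. P i \<longrightarrow> Q i (f i) y" by blast
  from choice[OF this] obtain g where "\<forall>i. P i \<longrightarrow> Q i (f i) (g i)" ..
  then show thesis using that by blast
qed

definition pivot_cleared :: "'k::zero opmat \<Rightarrow> nat \<Rightarrow> nat \<Rightarrow> bool" where
  "pivot_cleared B M N \<longleftrightarrow> B 0 0 \<noteq> op_zero \<and>
     (\<forall>i. 0 < i \<and> i < M \<longrightarrow> B i 0 = op_zero) \<and> (\<forall>j. 0 < j \<and> j < N \<longrightarrow> B 0 j = op_zero)"

lemma mat_eq_invariant_pivot_cleared:
  "0 < M \<Longrightarrow> 0 < N \<Longrightarrow> mat_eq_invariant (\<lambda>B. pivot_cleared B M N) M N"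
  by (auto simp: mat_eq_invariant_def pivot_cleared_def mat_eq_def)

context field_automorphism
begin

lemma corner_swap:
  assumes "ore_mat A M N" "i0 < M" "j0 < N"
  defines "A' \<equiv> mat_mult s (mat_mult s (swap_mat 0 i0) A M) (swap_mat 0 j0) N"
  shows "ore_mat A' M N" and "\<And>i j. i < M \<Longrightarrow> j < N \<Longrightarrow> A' i j = A (swap_index 0 i0 i) (swap_index 0 j0 j)"
    and "reduces_to A' M N (\<lambda>B. pivot_cleared B M N) \<Longrightarrow> reduces_to A M N (\<lambda>B. pivot_cleared B M N)"
proof -
  show "ore_mat A' M N" unfolding A'_def using assms(1) ore_mat_swap_mat by (intro ore_mat_mult)
  have "laurent_mat (mat_mult s (swap_mat 0 i0) A M) M N"
    using assms(1) ore_mat_swap_mat by (intro laurent_mat_mult ore_mat_laurent)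
  then show "A' i j = A (swap_index 0 i0 i) (swap_index 0 j0 j)" if "i < M" "j < N" for i j
    unfolding A'_def using that assms(2,3)
    by (simp add: mat_mult_swap_mat swap_mat_mult laurent_mat_def swap_index_less)
  show "reduces_to A M N (\<lambda>B. pivot_cleared B M N)" if "reduces_to A' M N (\<lambda>B. pivot_cleared B M N)"
    by (rule reduces_to_trans[OF assms(1) ore_inverses_swap_mat[of 0 M i0] ore_inverses_swap_mat[of 0 N j0]
          _ that mat_eq_invariant_pivot_cleared]) (use assms in auto)
qed

lemma column_reduction:
  assumes A: "ore_mat A M N" and "0 < M" "0 < N" and e: "A 0 0 \<noteq> op_zero"
  shows "\<exists>P Pv. ore_inverses P Pv M \<and> (\<forall>j<N. mat_mult s P A M 0 j = A 0 j) \<and>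
    (\<forall>i. 0 < i \<and> i < M \<longrightarrow> mat_mult s P A M i 0 = op_zero \<or> op_deg (mat_mult s P A M i 0) < op_deg (A 0 0))"
proof -
  have oe: "ore_op (A 0 0)" using A assms(2,3) by (simp add: ore_mat_def)
  have "\<forall>i. 0 < i \<and> i < M \<longrightarrow>
      (\<exists>q r. ore_op q \<and> A i 0 = op_add (op_mult s q (A 0 0)) r \<and> (r = op_zero \<or> op_deg r < op_deg (A 0 0)))"
    using left_division[OF _ oe e] A assms(3) by (simp add: ore_mat_def) blast
  then obtain q r where qr: "\<And>i. 0 < i \<and> i < M \<Longrightarrow>
      ore_op (q i) \<and> A i 0 = op_add (op_mult s (q i) (A 0 0)) (r i) \<and> (r i = op_zero \<or> op_deg (r i) < op_deg (A 0 0))"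
    by (rule choice_pair) blast
  let ?P = "row_elim_mat (\<lambda>i. op_neg (q i))"
  have "ore_inverses ?P (row_elim_mat (\<lambda>i. op_neg (op_neg (q i)))) M"
    by (rule ore_inverses_row_elim_mat) (use qr assms(2) in auto)
  moreover have "mat_mult s ?P A M i 0 = r i" if "0 < i" "i < M" for i
    using qr[of i] that row_elim_mat_mult[OF that(2) assms(2)]
    by (simp add: fun_eq_iff op_coeff_simps op_mult_neg_left)
  moreover have "mat_mult s ?P A M 0 j = A 0 j" for j
    using row_elim_mat_mult[OF assms(2) assms(2)] by simp
  ultimately show ?thesis using qr by (intro exI[of _ ?P] exI[of _ "row_elim_mat q"]) auto
qed

lemma row_reduction:
  assumes A: "ore_mat A M N" and "0 < M" "0 < N" and e: "A 0 0 \<noteq> op_zero"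
  shows "\<exists>Q Qv. ore_inverses Q Qv N \<and> (\<forall>i<M. mat_mult s A Q N i 0 = A i 0) \<and>
    (\<forall>j. 0 < j \<and> j < N \<longrightarrow> mat_mult s A Q N 0 j = op_zero \<or> op_deg (mat_mult s A Q N 0 j) < op_deg (A 0 0))"
proof -
  have oe: "ore_op (A 0 0)" using A assms(2,3) by (simp add: ore_mat_def)
  have lA: "\<And>i h. i < M \<Longrightarrow> h < N \<Longrightarrow> laurent_op (A i h)"
    using A by (simp add: ore_mat_def ore_op_laurent)
  have "\<forall>j. 0 < j \<and> j < N \<longrightarrow>
      (\<exists>q r. ore_op q \<and> A 0 j = op_add (op_mult s (A 0 0) q) r \<and> (r = op_zero \<or> op_deg r < op_deg (A 0 0)))"
    using right_division[OF _ oe e] A assms(2) by (simp add: ore_mat_def) blast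
  then obtain q r where qr: "\<And>j. 0 < j \<and> j < N \<Longrightarrow>
      ore_op (q j) \<and> A 0 j = op_add (op_mult s (A 0 0) (q j)) (r j) \<and> (r j = op_zero \<or> op_deg (r j) < op_deg (A 0 0))"
    by (rule choice_pair) blast
  let ?Q = "col_elim_mat (\<lambda>j. op_neg (q j))"
  have "ore_inverses ?Q (col_elim_mat (\<lambda>j. op_neg (op_neg (q j)))) N"
    by (rule ore_inverses_col_elim_mat) (use qr assms(3) in auto)
  moreover have "mat_mult s A ?Q N 0 j = r j" if "0 < j" "j < N" for j
    using qr[of j] that mat_mult_col_elim_mat[where A = A and i = 0, OF that(2) assms(3) lA[OF assms(2)]]
    by (simp add: fun_eq_iff op_coeff_simps op_mult_neg_right)
  moreover have "mat_mult s A ?Q N i 0 = A i 0" if "i < M" for i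
    using mat_mult_col_elim_mat[where A = A and i = i, OF assms(3) assms(3) lA[OF that]] by simp
  ultimately show ?thesis using qr by (intro exI[of _ ?Q] exI[of _ "col_elim_mat q"]) auto
qed

lemma reduces_to_pivot_cleared_corner:
  assumes "ore_mat A M N" "0 < M" "0 < N" "A 0 0 \<noteq> op_zero"
  shows "reduces_to A M N (\<lambda>B. pivot_cleared B M N)"
  using assms
proof (induction "nat (op_deg (A 0 0))" arbitrary: A rule: less_induct)
  case less
  have inv: "mat_eq_invariant (\<lambda>B. pivot_cleared B M N) M N"
    using mat_eq_invariant_pivot_cleared[OF less.prems(2,3)] .
  text \<open>A nonzero remainder of smaller degree is moved into the corner.\<close>
  have smaller: "reduces_to B M N (\<lambda>B. pivot_cleared B M N)"
    if B: "ore_mat B M N" and ij: "i < M" "j < N" "B i j \<noteq> op_zero" "op_deg (B i j) < op_deg (A 0 0)" for B i j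
  proof -
    note sw = corner_swap[OF B ij(1,2)]
    have "0 \<le> op_deg (B i j)" using op_deg_nonneg[of "B i j"] B ij by (simp add: ore_mat_def)
    then have "nat (op_deg (B i j)) < nat (op_deg (A 0 0))" using ij(4) by (simp add: nat_less_eq_zless)
    then show ?thesis
      using sw less.hyps[OF _ sw(1) less.prems(2,3)] sw(2)[OF less.prems(2,3)] ij by (simp add: swap_index_def)
  qed
  obtain P Pv where P: "ore_inverses P Pv M" "\<forall>j<N. mat_mult s P A M 0 j = A 0 j"
      "\<forall>i. 0 < i \<and> i < M \<longrightarrow> mat_mult s P A M i 0 = op_zero \<or> op_deg (mat_mult s P A M i 0) < op_deg (A 0 0)"
    using column_reduction[OF less.prems] by blast
  let ?A2 = "mat_mult s P A M"
  have A2: "ore_mat ?A2 M N" using P(1) less.prems(1) by (intro ore_mat_mult) (auto simp: ore_inverses_def)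
  have A2_00: "?A2 0 0 = A 0 0" using P(2) less.prems(3) by simp
  have red2: "reduces_to A M N (\<lambda>B. pivot_cleared B M N)" if "reduces_to ?A2 M N (\<lambda>B. pivot_cleared B M N)"
    by (rule reduces_to_mult_left[OF less.prems(1) P(1) that inv])
  show ?case
  proof (cases "\<exists>i. 0 < i \<and> i < M \<and> ?A2 i 0 \<noteq> op_zero")
    case True
    then show ?thesis using smaller[OF A2] P(3) less.prems(3) red2 by blast
  next
    case column_cleared: False
    obtain Q Qv where Q: "ore_inverses Q Qv N" "\<forall>i<M. mat_mult s ?A2 Q N i 0 = ?A2 i 0"
        "\<forall>j. 0 < j \<and> j < N \<longrightarrow> mat_mult s ?A2 Q N 0 j = op_zero \<or> op_deg (mat_mult s ?A2 Q N 0 j) < op_deg (?A2 0 0)"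
      using row_reduction[OF A2 less.prems(2,3)] A2_00 less.prems(4) by auto
    let ?A3 = "mat_mult s ?A2 Q N"
    have A3: "ore_mat ?A3 M N" using Q(1) by (intro ore_mat_mult[OF A2]) (simp add: ore_inverses_def)
    have red3: "reduces_to A M N (\<lambda>B. pivot_cleared B M N)" if "reduces_to ?A3 M N (\<lambda>B. pivot_cleared B M N)"
      by (rule red2, rule reduces_to_mult_right[OF A2 Q(1) that inv])
    show ?thesis
    proof (cases "\<exists>j. 0 < j \<and> j < N \<and> ?A3 0 j \<noteq> op_zero")
      case True
      then show ?thesis using smaller[OF A3] Q(3) A2_00 less.prems(2) red3 by fastforce
    next
      case False
      then have "pivot_cleared ?A3 M N"
        using column_cleared Q(2) A2_00 less.prems(2,4) by (auto simp: pivot_cleared_def)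
      then show ?thesis using red3 reduces_toI[OF A3 inv] by blast
    qed
  qed
qed

lemma reduces_to_pivot_cleared:
  assumes "ore_mat A M N" "i0 < M" "j0 < N" "A i0 j0 \<noteq> op_zero"
  shows "reduces_to A M N (\<lambda>B. pivot_cleared B M N)"
  using corner_swap[OF assms(1-3)] reduces_to_pivot_cleared_corner assms(2-4)
  by (simp add: swap_index_def)

end

definition diag_block :: "'k::zero op \<Rightarrow> 'k opmat \<Rightarrow> 'k opmat" where
  "diag_block c X = (\<lambda>i j. if i = 0 \<and> j = 0 then c else if i = 0 \<or> j = 0 then op_zero else X (i - 1) (j - 1))"

definition trunc_diag :: "(nat \<Rightarrow> 'k::zero op) \<Rightarrow> nat \<Rightarrow> 'k opmat" where
  "trunc_diag d r = (\<lambda>i j. if i = j \<and> i < r then d i else op_zero)"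

definition diagonal_form :: "nat \<Rightarrow> nat \<Rightarrow> 'k::zero opmat \<Rightarrow> bool" where
  "diagonal_form m n B \<longleftrightarrow> (\<exists>r d. r \<le> m \<and> r \<le> n \<and> (\<forall>i<r. ore_op (d i) \<and> d i \<noteq> op_zero) \<and>
     mat_eq B (trunc_diag d r) m n)"

lemma mat_eq_diag_block: "mat_eq X X' m n \<Longrightarrow> mat_eq (diag_block c X) (diag_block c X') (Suc m) (Suc n)"
  by (auto simp: mat_eq_def diag_block_def)

lemma diag_block_one_id: "diag_block op_one mat_id = mat_id"
  by (auto simp: fun_eq_iff op_coeff_simps diag_block_def mat_id_def)

lemma ore_mat_diag_block: "ore_op c \<Longrightarrow> ore_mat X m n \<Longrightarrow> ore_mat (diag_block c X) (Suc m) (Suc n)"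
  by (auto simp: ore_mat_def diag_block_def)

lemma diag_block_trunc_diag:
  "diag_block c (trunc_diag d r) = trunc_diag (\<lambda>i. if i = 0 then c else d (i - 1)) (Suc r)"
  by (auto simp: fun_eq_iff op_coeff_simps diag_block_def trunc_diag_def)

lemma pivot_cleared_diag_block:
  assumes "pivot_cleared B (Suc m) (Suc n)"
  shows "mat_eq B (diag_block (B 0 0) (\<lambda>i j. B (Suc i) (Suc j))) (Suc m) (Suc n)"
  using assms unfolding mat_eq_def pivot_cleared_def diag_block_def
  by (auto simp: not_less_eq less_Suc_eq_0_disj)

lemma mat_eq_invariant_diagonal_form: "mat_eq_invariant (diagonal_form m n) m n"
  unfolding mat_eq_invariant_def diagonal_form_def by (meson mat_eq_sym mat_eq_trans)

context field_automorphism
begin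

lemma op_sum_lessThan_Suc: "op_sum F {..<Suc k} = op_add (F 0) (op_sum (\<lambda>h. F (Suc h)) {..<k})"
  by (rule ext) (simp only: op_sum_apply op_add_apply sum.lessThan_Suc_shift)

lemma diag_block_mult:
  "mat_mult s (diag_block a X) (diag_block b Y) (Suc k) = diag_block (op_mult s a b) (mat_mult s X Y k)"
proof (rule ext, rule ext)
  fix i j
  show "mat_mult s (diag_block a X) (diag_block b Y) (Suc k) i j = diag_block (op_mult s a b) (mat_mult s X Y k) i j"
    by (cases i; cases j) (simp_all add: diag_block_def mat_mult_entry op_sum_lessThan_Suc)
qed

lemma ore_inverses_diag_block:
  assumes "ore_inverses P Pv m" shows "ore_inverses (diag_block op_one P) (diag_block op_one Pv) (Suc m)"
proof -
  have "mat_eq (mat_mult s (diag_block op_one P) (diag_block op_one Pv) (Suc m)) mat_id (Suc m) (Suc m)"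
    if "mat_eq (mat_mult s P Pv m) mat_id m m" for P Pv
    using mat_eq_diag_block[OF that, of op_one] by (simp add: diag_block_mult diag_block_one_id)
  then show ?thesis using assms
    by (auto simp: ore_inverses_def is_inverse_def intro: ore_mat_diag_block)
qed

lemma reduces_to_mat_eq:
  assumes "ore_mat B' M N" "mat_eq B B' M N" "reduces_to B' M N \<Phi>" "mat_eq_invariant \<Phi> M N"
  shows "reduces_to B M N \<Phi>"
proof -
  have B: "ore_mat B M N" using assms(1,2) by (simp add: ore_mat_def mat_eq_def)
  have "laurent_mat (mat_mult s mat_id B M) M N"
    using B by (intro laurent_mat_mult ore_mat_laurent) auto
  then have "mat_eq (mat_mult s (mat_mult s mat_id B M) mat_id N) B M N"
    using mat_mult_id mat_id_mult[of B M N] by (blast intro: mat_eq_trans)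
  then have "mat_eq B' (mat_mult s (mat_mult s mat_id B M) mat_id N) M N"
    using assms(2) by (blast intro: mat_eq_trans mat_eq_sym)
  then show ?thesis by (rule reduces_to_trans[OF B ore_inverses_id ore_inverses_id _ assms(3,4)])
qed

lemma reduces_to_diag_block:
  assumes X: "ore_mat X m n" "reduces_to X m n (diagonal_form m n)" and c: "ore_op c" "c \<noteq> op_zero"
  shows "reduces_to (diag_block c X) (Suc m) (Suc n) (diagonal_form (Suc m) (Suc n))"
proof -
  obtain P Pv Q Qv r d where PQ: "ore_inverses P Pv m" "ore_inverses Q Qv n"
    and d: "r \<le> m" "r \<le> n" "\<forall>i<r. ore_op (d i) \<and> d i \<noteq> op_zero"
      "mat_eq (mat_mult s (mat_mult s P X m) Q n) (trunc_diag d r) m n"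
    using X(2) unfolding reduces_to_def diagonal_form_def by blast
  have "mat_mult s (mat_mult s (diag_block op_one P) (diag_block c X) (Suc m)) (diag_block op_one Q) (Suc n)
      = diag_block c (mat_mult s (mat_mult s P X m) Q n)"
    using c(1) by (simp add: diag_block_mult ore_op_laurent)
  moreover have "mat_eq (diag_block c (mat_mult s (mat_mult s P X m) Q n))
      (trunc_diag (\<lambda>i. if i = 0 then c else d (i - 1)) (Suc r)) (Suc m) (Suc n)"
    using mat_eq_diag_block[OF d(4)] by (simp add: diag_block_trunc_diag)
  ultimately have "diagonal_form (Suc m) (Suc n)
      (mat_mult s (mat_mult s (diag_block op_one P) (diag_block c X) (Suc m)) (diag_block op_one Q) (Suc n))"
    unfolding diagonal_form_def using d c
    by (intro exI[of _ "Suc r"] exI[of _ "\<lambda>i. if i = 0 then c else d (i - 1)"]) auto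
  then show ?thesis
    unfolding reduces_to_def using ore_inverses_diag_block[OF PQ(1)] ore_inverses_diag_block[OF PQ(2)] by blast
qed

theorem reduces_to_diagonal_form: "ore_mat A m n \<Longrightarrow> reduces_to A m n (diagonal_form m n)"
proof (induction m arbitrary: n A)
  case 0
  have "diagonal_form 0 n A" unfolding diagonal_form_def by (intro exI[of _ 0]) (simp add: mat_eq_def)
  then show ?case by (rule reduces_toI[OF 0 mat_eq_invariant_diagonal_form])
next
  case (Suc m)
  show ?case
  proof (cases "\<forall>i<Suc m. \<forall>j<n. A i j = op_zero")
    case True
    have "diagonal_form (Suc m) n A" unfolding diagonal_form_def
      by (intro exI[of _ 0]) (use True in \<open>auto simp: mat_eq_def trunc_diag_def\<close>)
    then show ?thesis by (rule reduces_toI[OF Suc.prems mat_eq_invariant_diagonal_form])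
  next
    case False
    then obtain i0 j0 where ij: "i0 < Suc m" "j0 < n" "A i0 j0 \<noteq> op_zero" by blast
    then obtain n' where n': "n = Suc n'" by (cases n) auto
    obtain P Pv Q Qv where PQ: "ore_inverses P Pv (Suc m)" "ore_inverses Q Qv n"
      and cleared: "pivot_cleared (mat_mult s (mat_mult s P A (Suc m)) Q n) (Suc m) n"
      using reduces_to_pivot_cleared[OF Suc.prems ij] unfolding reduces_to_def by blast
    define B where "B = mat_mult s (mat_mult s P A (Suc m)) Q n"
    have B: "ore_mat B (Suc m) n" unfolding B_def using PQ Suc.prems
      by (intro ore_mat_mult) (auto simp: ore_inverses_def)
    define X where "X = (\<lambda>i j. B (Suc i) (Suc j))"
    have X: "ore_mat X m n'" using B n' by (simp add: ore_mat_def X_def)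
    have cleared: "pivot_cleared B (Suc m) (Suc n')" using cleared n' by (simp add: B_def)
    have pivot: "ore_op (B 0 0)" "B 0 0 \<noteq> op_zero"
      using B cleared n' by (simp_all add: ore_mat_def pivot_cleared_def)
    have "reduces_to (diag_block (B 0 0) X) (Suc m) (Suc n') (diagonal_form (Suc m) (Suc n'))"
      using reduces_to_diag_block[OF X Suc.IH[OF X] pivot] .
    moreover have "mat_eq B (diag_block (B 0 0) X) (Suc m) (Suc n')"
      using pivot_cleared_diag_block[OF cleared] by (simp add: X_def)
    ultimately have "reduces_to B (Suc m) n (diagonal_form (Suc m) n)"
      using reduces_to_mat_eq[OF ore_mat_diag_block[OF pivot(1) X] _ _ mat_eq_invariant_diagonal_form] n'
      by blast
    then show ?thesis
      using reduces_to_trans[OF Suc.prems PQ _ _ mat_eq_invariant_diagonal_form, of B]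
      by (simp add: B_def)
  qed
qed

end

section \<open>Invariance of the row rank\<close>

lemma left_lin_indep_iff: "left_lin_indep s A S n \<longleftrightarrow>
   (\<forall>u. (\<forall>i\<in>S. ore_op (u i)) \<and> (\<forall>j<n. op_sum (\<lambda>i. op_mult s (u i) (A i j)) S = op_zero) \<longrightarrow>
        (\<forall>i\<in>S. u i = op_zero))"
  by (simp add: left_lin_indep_def op_sum_def)

lemma left_lin_indep_mat_eq:
  assumes "mat_eq A A' m n" "S \<subseteq> {..<m}"
  shows "left_lin_indep s A S n \<longleftrightarrow> left_lin_indep s A' S n"
proof -
  have "\<And>u j. j < n \<Longrightarrow> op_sum (\<lambda>i. op_mult s (u i) (A i j)) S = op_sum (\<lambda>i. op_mult s (u i) (A' i j)) S"
    using assms by (intro op_sum_cong) (auto simp: mat_eq_def)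
  then show ?thesis unfolding left_lin_indep_iff by simp
qed

lemma finite_rank_candidates: "finite {card S | S. S \<subseteq> {..<m} \<and> left_lin_indep s A S n}"
proof (rule finite_subset)
  show "{card S | S. S \<subseteq> {..<m} \<and> left_lin_indep s A S n} \<subseteq> card ` Pow {..<m}" by auto
qed simp

lemma op_rank_eqI:
  assumes "S0 \<subseteq> {..<m}" "left_lin_indep s A S0 n" "card S0 = r"
    "\<And>S. S \<subseteq> {..<m} \<Longrightarrow> left_lin_indep s A S n \<Longrightarrow> card S \<le> r"
  shows "op_rank s A m n = r"
  unfolding op_rank_def
proof (rule Max_eqI[OF finite_rank_candidates])
  show "r \<in> {card S | S. S \<subseteq> {..<m} \<and> left_lin_indep s A S n}" using assms(1-3) by blast
qed (use assms(4) in blast)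

lemma max_left_lin_indep:
  "\<exists>T. T \<subseteq> {..<m} \<and> left_lin_indep s A T n \<and>
     (\<forall>S. S \<subseteq> {..<m} \<longrightarrow> left_lin_indep s A S n \<longrightarrow> card S \<le> card T)"
proof -
  let ?C = "{card S | S. S \<subseteq> {..<m} \<and> left_lin_indep s A S n}"
  have in_C: "S \<subseteq> {..<m} \<Longrightarrow> left_lin_indep s A S n \<Longrightarrow> card S \<in> ?C" for S
    by (rule CollectI, rule exI[of _ S]) simp
  have "?C \<noteq> {}" using in_C[of "{}"] by (auto simp: left_lin_indep_def)
  then have "Max ?C \<in> ?C" by (rule Max_in[OF finite_rank_candidates])
  then obtain T where T: "Max ?C = card T" "T \<subseteq> {..<m}" "left_lin_indep s A T n"
    by (elim CollectE exE conjE)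
  have "card S \<le> card T" if "S \<subseteq> {..<m}" "left_lin_indep s A S n" for S
    using Max_ge[OF finite_rank_candidates in_C[OF that]] T(1) by simp
  then show ?thesis using T(2,3) by blast
qed

definition row_dependent :: "('k::field \<Rightarrow> 'k) \<Rightarrow> 'k opmat \<Rightarrow> nat set \<Rightarrow> nat \<Rightarrow> (nat \<Rightarrow> 'k op) \<Rightarrow> bool" where
  "row_dependent s X T n x \<longleftrightarrow> (\<exists>c w. ore_op c \<and> c \<noteq> op_zero \<and> (\<forall>h\<in>T. ore_op (w h)) \<and>
     (\<forall>j<n. op_mult s c (x j) = op_sum (\<lambda>h. op_mult s (w h) (X h j)) T))"

lemma row_dependentI:
  assumes "ore_op c" "c \<noteq> op_zero" "\<And>j. j < n \<Longrightarrow> op_mult s c (x j) = op_sum (\<lambda>h. op_mult s (w h) (X h j)) T"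
    "\<And>h. h \<in> T \<Longrightarrow> ore_op (w h)"
  shows "row_dependent s X T n x"
  using assms unfolding row_dependent_def by blast

lemma row_dependentE:
  assumes "row_dependent s X T n x"
  obtains c w where "ore_op c" "c \<noteq> op_zero" "\<forall>h\<in>T. ore_op (w h)"
    "\<forall>j<n. op_mult s c (x j) = op_sum (\<lambda>h. op_mult s (w h) (X h j)) T"
  using assms unfolding row_dependent_def by blast

lemma row_dependent_cong:
  "(\<And>j. j < n \<Longrightarrow> x j = y j) \<Longrightarrow> row_dependent s X T n x \<longleftrightarrow> row_dependent s X T n y"
  by (simp add: row_dependent_def)

context field_automorphism
begin

lemma left_lin_indep_subset:
  assumes "finite S" "left_lin_indep s A S n" "T \<subseteq> S"
  shows "left_lin_indep s A T n"
  unfolding left_lin_indep_iff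
proof (intro allI impI)
  fix u assume u: "(\<forall>i\<in>T. ore_op (u i)) \<and> (\<forall>j<n. op_sum (\<lambda>i. op_mult s (u i) (A i j)) T = op_zero)"
  define u' where "u' i = (if i \<in> T then u i else op_zero)" for i
  have "op_sum (\<lambda>i. op_mult s (u' i) (A i j)) S = op_sum (\<lambda>i. op_mult s (u i) (A i j)) T" for j
    unfolding op_sum_def u'_def
    by (intro ext sum.mono_neutral_cong_right[OF assms(1) assms(3)]) (auto simp: op_zero_apply)
  then have "\<forall>i\<in>S. u' i = op_zero"
    using assms(2) u unfolding left_lin_indep_iff by (elim allE[of _ u']) (auto simp: u'_def)
  then show "\<forall>i\<in>T. u i = op_zero" using assms(3) unfolding u'_def by fastforce
qed

lemma op_sum_mult_op_sum:
  assumes "finite I" "finite T" "\<And>i. i \<in> I \<Longrightarrow> laurent_op (g i)"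
    "\<And>i h. i \<in> I \<Longrightarrow> h \<in> T \<Longrightarrow> laurent_op (w i h)"
  shows "op_sum (\<lambda>i. op_mult s (g i) (op_sum (\<lambda>h. op_mult s (w i h) (X h)) T)) I
       = op_sum (\<lambda>h. op_mult s (op_sum (\<lambda>i. op_mult s (g i) (w i h)) I) (X h)) T"
proof -
  have "op_sum (\<lambda>i. op_mult s (g i) (op_sum (\<lambda>h. op_mult s (w i h) (X h)) T)) I
      = op_sum (\<lambda>i. op_sum (\<lambda>h. op_mult s (op_mult s (g i) (w i h)) (X h)) T) I"
    unfolding op_mult_sum_right using assms by (intro op_sum_cong op_mult_assoc[symmetric]) auto
  also have "\<dots> = op_sum (\<lambda>h. op_mult s (op_sum (\<lambda>i. op_mult s (g i) (w i h)) I) (X h)) T"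
    by (subst op_sum_swap[symmetric], intro op_sum_cong, subst op_mult_sum_left) (use assms in auto)
  finally show ?thesis .
qed

lemma left_lin_indep_mult_right:
  assumes X: "ore_mat X m k" and Q: "ore_mat Q k n" and S: "S \<subseteq> {..<m}"
    and indep: "left_lin_indep s (mat_mult s X Q k) S n"
  shows "left_lin_indep s X S k"
  unfolding left_lin_indep_iff
proof (intro allI impI)
  fix u assume u: "(\<forall>i\<in>S. ore_op (u i)) \<and> (\<forall>j<k. op_sum (\<lambda>i. op_mult s (u i) (X i j)) S = op_zero)"
  have "finite S" using S finite_subset by blast
  then have "op_sum (\<lambda>i. op_mult s (u i) (mat_mult s X Q k i j)) S
      = op_sum (\<lambda>h. op_mult s (op_sum (\<lambda>i. op_mult s (u i) (X i h)) S) (Q h j)) {..<k}" for j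
    unfolding mat_mult_entry
    by (rule op_sum_mult_op_sum) (use u X S in \<open>auto simp: ore_mat_def ore_op_laurent\<close>)
  moreover have "op_sum (\<lambda>h. op_mult s (op_sum (\<lambda>i. op_mult s (u i) (X i h)) S) (Q h j)) {..<k} = op_zero" for j
    using u by (intro op_sum_zeroI) simp
  ultimately have "op_sum (\<lambda>i. op_mult s (u i) (mat_mult s X Q k i j)) S = op_zero" for j
    by simp
  then show "\<forall>i\<in>S. u i = op_zero" using indep u unfolding left_lin_indep_iff by blast
qed

lemma card_left_lin_indep_le:
  assumes S: "S \<subseteq> {..<m}" and indep: "left_lin_indep s Y S n"
    and zero: "\<And>i j. r \<le> i \<Longrightarrow> i < m \<Longrightarrow> j < n \<Longrightarrow> Y i j = op_zero"
  shows "card S \<le> r"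
proof -
  have fS: "finite S" using S finite_subset by blast
  have "i < r" if i: "i \<in> S" for i
  proof (rule ccontr)
    assume "\<not> i < r"
    define u :: "nat \<Rightarrow> 'k op" where "u p = (if p = i then op_one else op_zero)" for p
    have "op_sum (\<lambda>p. op_mult s (u p) (Y p j)) S = op_zero" if "j < n" for j
    proof -
      have "op_sum (\<lambda>p. op_mult s (u p) (Y p j)) S = op_sum (\<lambda>p. if p = i then Y p j else op_zero) S"
        by (rule op_sum_cong) (simp add: u_def)
      also have "\<dots> = Y i j" using fS i by (simp add: op_sum_delta)
      finally show ?thesis using zero \<open>\<not> i < r\<close> i S that by auto
    qed
    moreover have "\<forall>p\<in>S. ore_op (u p)" by (simp add: u_def)
    ultimately have "\<forall>p\<in>S. u p = op_zero"
      using indep unfolding left_lin_indep_iff by blast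
    then have "u i = op_zero" using i by blast
    then show False by (simp add: u_def)
  qed
  then have "S \<subseteq> {..<r}" by blast
  then show ?thesis using card_mono[of "{..<r}" S] by simp
qed

lemma left_lin_indep_trunc_diag:
  assumes "r \<le> n" "\<forall>i<r. ore_op (d i) \<and> d i \<noteq> op_zero"
  shows "left_lin_indep s (trunc_diag d r) {..<r} n"
  unfolding left_lin_indep_iff
proof (intro allI impI ballI)
  fix u i assume u: "(\<forall>i\<in>{..<r}. ore_op (u i)) \<and>
      (\<forall>j<n. op_sum (\<lambda>i. op_mult s (u i) (trunc_diag d r i j)) {..<r} = op_zero)"
    and i: "i \<in> {..<r}"
  have "op_sum (\<lambda>p. op_mult s (u p) (trunc_diag d r p i)) {..<r}
      = op_sum (\<lambda>p. if p = i then op_mult s (u p) (d p) else op_zero) {..<r}"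
    by (rule op_sum_cong) (use i in \<open>auto simp: trunc_diag_def\<close>)
  also have "\<dots> = op_mult s (u i) (d i)" using i by (simp add: op_sum_delta)
  finally have "op_mult s (u i) (d i) = op_zero" using u i assms(1) by auto
  then show "u i = op_zero"
    using op_mult_nonzero[OF ore_op_laurent ore_op_laurent, of "u i" "d i"] u i assms(2) by auto
qed

lemma row_dependent_max_left_lin_indep:
  assumes T: "T \<subseteq> {..<m}" "left_lin_indep s X T n"
    and maxT: "\<And>S. S \<subseteq> {..<m} \<Longrightarrow> left_lin_indep s X S n \<Longrightarrow> card S \<le> card T"
    and i: "i < m"
  shows "row_dependent s X T n (X i)"
proof (cases "i \<in> T")
  case True
  have fT: "finite T" using T(1) finite_subset by blast
  have "op_sum (\<lambda>h. op_mult s (if h = i then op_one else op_zero) (X h j)) T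
      = op_sum (\<lambda>h. if h = i then X h j else op_zero) T" for j
    by (rule op_sum_cong) simp
  then have "op_sum (\<lambda>h. op_mult s (if h = i then op_one else op_zero) (X h j)) T = X i j" for j
    using op_sum_delta[OF fT True] by simp
  then show ?thesis unfolding row_dependent_def
    by (intro exI[of _ op_one] exI[of _ "\<lambda>h. if h = i then op_one else op_zero"]) simp
next
  case False
  have fT: "finite T" using T(1) finite_subset by blast
  then have "\<not> left_lin_indep s X (insert i T) n"
    using maxT[of "insert i T"] T(1) i False by fastforce
  then obtain u where u: "\<forall>p\<in>insert i T. ore_op (u p)" "\<exists>p\<in>insert i T. u p \<noteq> op_zero"
      and "\<forall>j<n. op_sum (\<lambda>p. op_mult s (u p) (X p j)) (insert i T) = op_zero"
    unfolding left_lin_indep_iff by blast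
  then have comb: "\<And>j. j < n \<Longrightarrow> op_add (op_mult s (u i) (X i j)) (op_sum (\<lambda>p. op_mult s (u p) (X p j)) T) = op_zero"
    by (simp add: op_sum_insert[OF fT False])
  have ui: "u i \<noteq> op_zero"
  proof
    assume "u i = op_zero"
    then have "\<forall>j<n. op_sum (\<lambda>p. op_mult s (u p) (X p j)) T = op_zero" using comb by simp
    then have "\<forall>p\<in>T. u p = op_zero" using T(2) u(1) unfolding left_lin_indep_iff by blast
    with u(2) \<open>u i = op_zero\<close> show False by blast
  qed
  have "op_mult s (u i) (X i j) = op_sum (\<lambda>h. op_mult s (op_neg (u h)) (X h j)) T" if "j < n" for j
    using fun_cong[OF comb[OF that]]
    by (simp add: fun_eq_iff op_coeff_simps op_mult_neg_left sum_negf eq_neg_iff_add_eq_0)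
  then show ?thesis unfolding row_dependent_def using u(1) ui
    by (intro exI[of _ "u i"] exI[of _ "\<lambda>h. op_neg (u h)"]) auto
qed

text \<open>The denominators of the rows are merged with the Ore condition.\<close>
lemma row_dependent_mult:
  assumes X: "ore_mat X m n" and T: "finite T" "T \<subseteq> {..<m}"
    and dep: "\<And>i. i < m \<Longrightarrow> row_dependent s X T n (X i)"
    and z: "\<And>i. i < m \<Longrightarrow> ore_op (z i)"
  shows "row_dependent s X T n (\<lambda>j. op_sum (\<lambda>i. op_mult s (z i) (X i j)) {..<m})"
proof -
  have "\<exists>v w. (ore_op v \<and> v \<noteq> op_zero) \<and> (\<forall>h\<in>T. ore_op (w h)) \<and>
      (\<forall>j<n. op_mult s v (X i j) = op_sum (\<lambda>h. op_mult s (w h) (X h j)) T)" if "i < m" for i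
    using dep[OF that] by (elim row_dependentE) blast
  then have "\<forall>i. i < m \<longrightarrow> (\<exists>v w. (ore_op v \<and> v \<noteq> op_zero) \<and> (\<forall>h\<in>T. ore_op (w h)) \<and>
      (\<forall>j<n. op_mult s v (X i j) = op_sum (\<lambda>h. op_mult s (w h) (X h j)) T))" by blast
  then obtain v w where "\<And>i. i < m \<Longrightarrow> (ore_op (v i) \<and> v i \<noteq> op_zero) \<and> (\<forall>h\<in>T. ore_op (w i h)) \<and>
      (\<forall>j<n. op_mult s (v i) (X i j) = op_sum (\<lambda>h. op_mult s (w i h) (X h j)) T)"
    by (rule choice_pair) blast
  then have v: "\<And>i. i < m \<Longrightarrow> ore_op (v i) \<and> v i \<noteq> op_zero"
    and w: "\<And>i h. i < m \<Longrightarrow> h \<in> T \<Longrightarrow> ore_op (w i h)"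
    and vw: "\<And>i j. i < m \<Longrightarrow> j < n \<Longrightarrow> op_mult s (v i) (X i j) = op_sum (\<lambda>h. op_mult s (w i h) (X h j)) T"
    by blast+
  obtain c g where c: "ore_op c" "c \<noteq> op_zero"
    and g: "\<forall>i\<in>{..<m}. ore_op (g i) \<and> op_mult s c (z i) = op_mult s (g i) (v i)"
    using common_left_multiple[of "{..<m}" z v] z v by auto
  show ?thesis
  proof (rule row_dependentI[OF c])
    fix j assume j: "j < n"
    have "op_mult s c (op_sum (\<lambda>i. op_mult s (z i) (X i j)) {..<m})
        = op_sum (\<lambda>i. op_mult s (g i) (op_mult s (v i) (X i j))) {..<m}"
      unfolding op_mult_sum_right
    proof (rule op_sum_cong)
      fix i assume "i \<in> {..<m}"
      then show "op_mult s c (op_mult s (z i) (X i j)) = op_mult s (g i) (op_mult s (v i) (X i j))"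
        using g c(1) v z by (simp add: op_mult_assoc[symmetric] ore_op_laurent)
    qed
    also have "\<dots> = op_sum (\<lambda>i. op_mult s (g i) (op_sum (\<lambda>h. op_mult s (w i h) (X h j)) T)) {..<m}"
      using vw j by (intro op_sum_cong) auto
    also have "\<dots> = op_sum (\<lambda>h. op_mult s (op_sum (\<lambda>i. op_mult s (g i) (w i h)) {..<m}) (X h j)) T"
      by (rule op_sum_mult_op_sum) (use T g w in \<open>auto simp: ore_op_laurent\<close>)
    finally show "op_mult s c (op_sum (\<lambda>i. op_mult s (z i) (X i j)) {..<m})
        = op_sum (\<lambda>h. op_mult s (op_sum (\<lambda>i. op_mult s (g i) (w i h)) {..<m}) (X h j)) T" .
  next
    fix h assume "h \<in> T"
    then show "ore_op (op_sum (\<lambda>i. op_mult s (g i) (w i h)) {..<m})"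
      using g w by (intro ore_op_sum ore_op_mult) auto
  qed
qed

lemma op_sum_eliminate:
  assumes "finite S" "p0 \<notin> S" "\<And>p. p \<in> S \<Longrightarrow> laurent_op (e p) \<and> laurent_op (x p) \<and> laurent_op (y p)"
  shows "op_sum (\<lambda>p. op_mult s (if p = p0 then op_neg (op_sum (\<lambda>q. op_mult s (e q) (x q)) S)
                                 else op_mult s (e p) (y p)) (a p)) (insert p0 S)
       = op_sum (\<lambda>p. op_mult s (e p) (op_add (op_mult s (y p) (a p)) (op_neg (op_mult s (x p) (a p0))))) S"
proof -
  have "op_mult s (op_neg (op_sum (\<lambda>q. op_mult s (e q) (x q)) S)) (a p0)
      = op_neg (op_sum (\<lambda>p. op_mult s (e p) (op_mult s (x p) (a p0))) S)"
    unfolding op_mult_neg_left using assms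
    by (subst op_mult_sum_left) (auto intro!: arg_cong[where f = op_neg] op_sum_cong op_mult_assoc)
  moreover have "op_sum (\<lambda>p. op_mult s (if p = p0 then op_neg (op_sum (\<lambda>q. op_mult s (e q) (x q)) S)
                                 else op_mult s (e p) (y p)) (a p)) S
      = op_sum (\<lambda>p. op_mult s (e p) (op_mult s (y p) (a p))) S"
    using assms(2,3) by (intro op_sum_cong) (auto simp: op_mult_assoc)
  ultimately show ?thesis using assms(1,2)
    by (simp add: op_sum_insert fun_eq_iff op_coeff_simps op_mult_add_right op_mult_neg_right
        sum.distrib sum_negf sum_subtractf)
qed

text \<open>One
  column \<open>h\<^sub>0\<close> is eliminated against a row with nonzero entry there, using the Ore condition.\<close>
lemma left_dependent_of_card_gt:
  assumes "finite T" "finite S" "card T < card S" "\<forall>p\<in>S. \<forall>h\<in>T. ore_op (a p h)"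
  shows "\<exists>e. (\<forall>p\<in>S. ore_op (e p)) \<and> (\<exists>p\<in>S. e p \<noteq> op_zero) \<and>
           (\<forall>h\<in>T. op_sum (\<lambda>p. op_mult s (e p) (a p h)) S = op_zero)"
  using assms
proof (induction T arbitrary: S a rule: finite_induct)
  case empty
  then obtain p0 where "p0 \<in> S" by fastforce
  then show ?case
    by (intro exI[of _ "\<lambda>p. if p = p0 then op_one else op_zero"]) auto
next
  case (insert h0 T)
  have cT: "card T < card S" using insert.prems(2) insert.hyps by simp
  show ?case
  proof (cases "\<forall>p\<in>S. a p h0 = op_zero")
    case True
    then have "op_sum (\<lambda>p. op_mult s (e p) (a p h0)) S = op_zero" for e
      by (intro op_sum_zeroI) simp
    then show ?thesis using insert.IH[OF insert.prems(1) cT] insert.prems(3) by auto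
  next
    case False
    then obtain p0 where p0: "p0 \<in> S" "a p0 h0 \<noteq> op_zero" by blast
    define S' where "S' = S - {p0}"
    have S': "finite S'" "p0 \<notin> S'" "S = insert p0 S'" "card T < card S'"
      using insert.prems insert.hyps p0 by (auto simp: S'_def)
    have a0: "ore_op (a p0 h0)" using insert.prems(3) p0 by blast
    have "\<exists>x y. ore_op x \<and> ore_op y \<and> y \<noteq> op_zero \<and> op_mult s y (a p h0) = op_mult s x (a p0 h0)"
      if "p \<in> S'" for p
      using left_ore_condition[OF _ a0 p0(2)] insert.prems(3) that by (simp add: S'_def)
    then have "\<forall>p. p \<in> S' \<longrightarrow> (\<exists>x y. ore_op x \<and> ore_op y \<and> y \<noteq> op_zero \<and>
        op_mult s y (a p h0) = op_mult s x (a p0 h0))" by blast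
    then obtain x y where xy: "\<And>p. p \<in> S' \<Longrightarrow> ore_op (x p) \<and> ore_op (y p) \<and> y p \<noteq> op_zero \<and>
        op_mult s (y p) (a p h0) = op_mult s (x p) (a p0 h0)"
      by (rule choice_pair) blast
    define b where "b p h = op_add (op_mult s (y p) (a p h)) (op_neg (op_mult s (x p) (a p0 h)))" for p h
    have "\<forall>p\<in>S'. \<forall>h\<in>T. ore_op (b p h)"
      using xy insert.prems(3) p0 by (auto simp: b_def S'_def)
    then obtain e' where e': "\<forall>p\<in>S'. ore_op (e' p)" "\<exists>p\<in>S'. e' p \<noteq> op_zero"
        "\<forall>h\<in>T. op_sum (\<lambda>p. op_mult s (e' p) (b p h)) S' = op_zero"
      using insert.IH[OF S'(1,4)] by blast
    define e where "e p = (if p = p0 then op_neg (op_sum (\<lambda>p. op_mult s (e' p) (x p)) S')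
                           else op_mult s (e' p) (y p))" for p
    have "op_sum (\<lambda>p. op_mult s (e p) (a p h)) S = op_sum (\<lambda>p. op_mult s (e' p) (b p h)) S'" for h
      unfolding e_def b_def S'(3)
      by (rule op_sum_eliminate[OF S'(1,2)]) (use xy e'(1) in \<open>simp add: ore_op_laurent\<close>)
    moreover have "op_sum (\<lambda>p. op_mult s (e' p) (b p h0)) S' = op_zero"
      using xy by (intro op_sum_zeroI) (simp add: b_def)
    ultimately have z: "\<forall>h\<in>insert h0 T. op_sum (\<lambda>p. op_mult s (e p) (a p h)) S = op_zero"
      using e'(3) by auto
    obtain p1 where p1: "p1 \<in> S'" "e' p1 \<noteq> op_zero" using e'(2) by blast
    then have "e p1 \<noteq> op_zero"
      using op_mult_nonzero[OF ore_op_laurent ore_op_laurent p1(2)] xy e'(1) S'(2) by (auto simp: e_def)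
    moreover have "\<forall>p\<in>S. ore_op (e p)" using e'(1) xy S' by (auto simp: e_def)
    ultimately show ?thesis using z p1 S' by (intro exI[of _ e]) auto
  qed
qed

text \<open>Independent rows that all depend on \<open>T\<close> are at most \<open>|T|\<close> many: otherwise the exchange lemma
  yields a left dependence among their nonzero left multiples.\<close>
lemma card_le_of_row_dependent:
  assumes fT: "finite T" and fS: "finite S" and indep: "left_lin_indep s Y S n"
    and dep: "\<And>p. p \<in> S \<Longrightarrow> row_dependent s X T n (Y p)"
  shows "card S \<le> card T"
proof (rule ccontr)
  assume "\<not> card S \<le> card T"
  have "\<exists>c w. (ore_op c \<and> c \<noteq> op_zero) \<and> (\<forall>h\<in>T. ore_op (w h)) \<and>
      (\<forall>j<n. op_mult s c (Y p j) = op_sum (\<lambda>h. op_mult s (w h) (X h j)) T)" if "p \<in> S" for p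
    using dep[OF that] by (elim row_dependentE) blast
  then have "\<forall>p. p \<in> S \<longrightarrow> (\<exists>c w. (ore_op c \<and> c \<noteq> op_zero) \<and> (\<forall>h\<in>T. ore_op (w h)) \<and>
      (\<forall>j<n. op_mult s c (Y p j) = op_sum (\<lambda>h. op_mult s (w h) (X h j)) T))" by blast
  then obtain c w where "\<And>p. p \<in> S \<Longrightarrow> (ore_op (c p) \<and> c p \<noteq> op_zero) \<and> (\<forall>h\<in>T. ore_op (w p h)) \<and>
      (\<forall>j<n. op_mult s (c p) (Y p j) = op_sum (\<lambda>h. op_mult s (w p h) (X h j)) T)"
    by (rule choice_pair) blast
  then have c: "\<And>p. p \<in> S \<Longrightarrow> ore_op (c p) \<and> c p \<noteq> op_zero"
    and w: "\<And>p h. p \<in> S \<Longrightarrow> h \<in> T \<Longrightarrow> ore_op (w p h)"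
    and cw: "\<And>p j. p \<in> S \<Longrightarrow> j < n \<Longrightarrow> op_mult s (c p) (Y p j) = op_sum (\<lambda>h. op_mult s (w p h) (X h j)) T"
    by blast+
  have "card T < card S" "\<forall>p\<in>S. \<forall>h\<in>T. ore_op (w p h)" using \<open>\<not> card S \<le> card T\<close> w by auto
  then obtain e where e: "\<forall>p\<in>S. ore_op (e p)" "\<exists>p\<in>S. e p \<noteq> op_zero"
      "\<forall>h\<in>T. op_sum (\<lambda>p. op_mult s (e p) (w p h)) S = op_zero"
    using left_dependent_of_card_gt[OF fT fS] by blast
  have comb: "op_sum (\<lambda>p. op_mult s (op_mult s (e p) (c p)) (Y p j)) S = op_zero" if j: "j < n" for j
  proof -
    have "op_sum (\<lambda>p. op_mult s (op_mult s (e p) (c p)) (Y p j)) S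
        = op_sum (\<lambda>p. op_mult s (e p) (op_sum (\<lambda>h. op_mult s (w p h) (X h j)) T)) S"
      using e(1) c cw j by (intro op_sum_cong) (simp add: op_mult_assoc ore_op_laurent)
    also have "\<dots> = op_sum (\<lambda>h. op_mult s (op_sum (\<lambda>p. op_mult s (e p) (w p h)) S) (X h j)) T"
      by (rule op_sum_mult_op_sum) (use fS fT e(1) w in \<open>auto simp: ore_op_laurent\<close>)
    finally show ?thesis using e(3) by (simp add: op_sum_zeroI)
  qed
  have "\<forall>p\<in>S. ore_op (op_mult s (e p) (c p))" using e(1) c by simp
  with indep comb have "\<forall>p\<in>S. op_mult s (e p) (c p) = op_zero"
    unfolding left_lin_indep_iff by (elim allE[of _ "\<lambda>p. op_mult s (e p) (c p)"]) blast
  moreover obtain p1 where "p1 \<in> S" "e p1 \<noteq> op_zero" using e(2) by blast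
  ultimately show False
    using op_mult_nonzero[OF ore_op_laurent ore_op_laurent, of "e p1" "c p1"] e(1) c by auto
qed

lemma left_lin_indep_of_mult:
  assumes X: "ore_mat X m n" and Z: "ore_mat Z m' m" and Y: "mat_eq Y (mat_mult s Z X m) m' n"
    and S': "S' \<subseteq> {..<m'}" "left_lin_indep s Y S' n"
  shows "\<exists>S. S \<subseteq> {..<m} \<and> left_lin_indep s X S n \<and> card S = card S'"
proof -
  obtain T where T: "T \<subseteq> {..<m}" "left_lin_indep s X T n"
    and maxT: "\<And>S. S \<subseteq> {..<m} \<Longrightarrow> left_lin_indep s X S n \<Longrightarrow> card S \<le> card T"
    using max_left_lin_indep[of m s X n] by blast
  have fT: "finite T" and fS': "finite S'" using T(1) S'(1) finite_subset by blast+
  have "row_dependent s X T n (Y p)" if p: "p \<in> S'" for p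
  proof -
    have "row_dependent s X T n (\<lambda>j. op_sum (\<lambda>i. op_mult s (Z p i) (X i j)) {..<m})"
      by (rule row_dependent_mult[OF X fT T(1) row_dependent_max_left_lin_indep[OF T maxT]])
        (use Z S'(1) p in \<open>auto simp: ore_mat_def\<close>)
    moreover have "\<And>j. j < n \<Longrightarrow> Y p j = op_sum (\<lambda>i. op_mult s (Z p i) (X i j)) {..<m}"
      using Y S'(1) p unfolding mat_eq_def mat_mult_entry by blast
    ultimately show ?thesis
      using row_dependent_cong[of n "Y p" "\<lambda>j. op_sum (\<lambda>i. op_mult s (Z p i) (X i j)) {..<m}"] by blast
  qed
  then have "card S' \<le> card T" by (rule card_le_of_row_dependent[OF fT fS' S'(2)])
  then obtain S where "S \<subseteq> T" "card S = card S'" using obtain_subset_with_card_n by metis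
  then show ?thesis using left_lin_indep_subset[OF fT T(2)] T(1) by blast
qed

lemma op_rank_eq_diagonal:
  assumes A: "ore_mat A m n" and P: "ore_inverses P Pv m" and Q: "ore_inverses Q Qv n"
    and eq: "mat_eq (mat_mult s (mat_mult s P A m) Q n) (trunc_diag d r) m n"
    and r: "r \<le> m" "r \<le> n" and d: "\<forall>i<r. ore_op (d i) \<and> d i \<noteq> op_zero"
  shows "op_rank s A m n = r"
proof -
  have oP: "ore_mat P m m" "ore_mat Pv m m" and oQ: "ore_mat Q n n" "ore_mat Qv n n"
    and invP: "mat_eq (mat_mult s Pv P m) mat_id m m" and invQ: "mat_eq (mat_mult s Q Qv n) mat_id n n"
    using P Q by (auto simp: ore_inverses_def is_inverse_def)
  have oPA: "ore_mat (mat_mult s P A m) m n" using oP A by (intro ore_mat_mult)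
  let ?X = "mat_mult s (trunc_diag d r) Qv n"
  have "mat_eq ?X (mat_mult s (mat_mult s (mat_mult s P A m) Q n) Qv n) m n"
    by (rule mat_mult_cong_left, rule mat_eq_sym, rule eq)
  then have X_PA: "mat_eq ?X (mat_mult s P A m) m n"
    using mat_mult_cancel_right[OF ore_mat_laurent[OF oPA] ore_mat_laurent[OF oQ(1)] invQ]
    by (rule mat_eq_trans)
  have "mat_eq (mat_mult s Pv ?X m) (mat_mult s Pv (mat_mult s P A m) m) m n"
    by (rule mat_mult_cong_right[OF X_PA])
  then have "mat_eq (mat_mult s Pv ?X m) A m n"
    using mat_mult_cancel_left[OF ore_mat_laurent[OF oP(2)] ore_mat_laurent[OF oP(1)] invP]
    by (rule mat_eq_trans)
  then have A_X: "mat_eq A (mat_mult s Pv ?X m) m n" by (rule mat_eq_sym)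
  have oX: "ore_mat ?X m n" using d oQ by (intro ore_mat_mult) (auto simp: ore_mat_def trunc_diag_def)
  have X_zero: "?X i j = op_zero" if "r \<le> i" for i j
    unfolding mat_mult_entry using that by (intro op_sum_zeroI) (simp add: trunc_diag_def)
  have "left_lin_indep s (mat_mult s (mat_mult s P A m) Q n) {..<r} n"
    using left_lin_indep_mat_eq[OF eq, of "{..<r}"] left_lin_indep_trunc_diag[OF r(2) d] r(1) by auto
  then have indep_PA: "left_lin_indep s (mat_mult s P A m) {..<r} n"
    by (rule left_lin_indep_mult_right[OF oPA oQ(1), rotated]) (use r in auto)
  obtain S0 where S0: "S0 \<subseteq> {..<m}" "left_lin_indep s A S0 n" "card S0 = r"
    using left_lin_indep_of_mult[OF A oP(1) mat_eq_refl _ indep_PA] r(1) by auto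
  show ?thesis
  proof (rule op_rank_eqI[OF S0])
    fix S assume S: "S \<subseteq> {..<m}" "left_lin_indep s A S n"
    obtain S2 where "S2 \<subseteq> {..<m}" "left_lin_indep s ?X S2 n" "card S2 = card S"
      using left_lin_indep_of_mult[OF oX oP(2) A_X S] by blast
    then show "card S \<le> r" using card_left_lin_indep_le[of S2 m ?X n r] X_zero by auto
  qed
qed

end

section \<open>Diagonal systems: solutions and full regularity\<close>

definition diag_op :: "(nat \<Rightarrow> 'k::zero op) \<Rightarrow> 'k opmat" where
  "diag_op f = (\<lambda>i j. if i = j then f i else op_zero)"

definition op_low :: "'k::zero op \<Rightarrow> int" where
  "op_low L = Min (op_supp L)"

lemma
  assumes "laurent_op L" "L \<noteq> op_zero"
  shows op_low_coeff_nonzero: "L (op_low L) \<noteq> 0"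
    and coeff_below_op_low: "i < op_low L \<Longrightarrow> L i = 0"
proof -
  have f: "finite (op_supp L)" using assms(1) by (simp add: laurent_op_def)
  have ne: "op_supp L \<noteq> {}" using assms(2) by (auto simp: op_supp_def op_zero_def)
  show "L (op_low L) \<noteq> 0" using Min_in[OF f ne] by (simp add: op_low_def op_supp_def)
  show "i < op_low L \<Longrightarrow> L i = 0" using Min_le[OF f, of i] by (force simp: op_low_def op_supp_def)
qed

lemma det_coeff_mat_diag_op:
  fixes G :: "nat \<Rightarrow> 'k::field op"
  assumes "\<And>i. i < r \<Longrightarrow> G i t \<noteq> 0"
  shows "det (coeff_mat (diag_op G) r t) \<noteq> 0"
proof -
  let ?M = "coeff_mat (diag_op G) r t"
  have "upper_triangular ?M" by (auto simp: upper_triangular_def coeff_mat_def diag_op_def op_zero_def)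
  moreover have "?M \<in> carrier_mat r r" by (simp add: coeff_mat_def)
  ultimately have "det ?M = prod_list (diag_mat ?M)" by (rule det_upper_triangular)
  also have "\<dots> \<noteq> 0"
    using assms by (auto simp: diag_mat_def coeff_mat_def diag_op_def prod_list_zero_iff)
  finally show ?thesis .
qed

lemma op_mat_order_diag_op:
  fixes G :: "nat \<Rightarrow> 'k::field op"
  assumes "0 < r" and G: "\<And>i. i < r \<Longrightarrow> ore_op (G i) \<and> G i \<noteq> op_zero \<and> op_deg (G i) = l"
  shows "op_mat_order (diag_op G) r = l"
proof -
  let ?S = "{i. \<exists>j<r. \<exists>k<r. diag_op G j k i \<noteq> 0} \<union> {0}"
  have l: "0 \<le> l" using G[OF assms(1)] op_deg_nonneg by blast
  have "t \<in> {0..l}" if t: "t \<in> ?S" for t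
  proof (cases "t = 0")
    case False
    then obtain j where j: "j < r" "G j t \<noteq> 0" using t by (auto simp: diag_op_def op_zero_def split: if_splits)
    then have "t \<le> l" using G[OF j(1)] coeff_above_op_deg[OF ore_op_laurent] by (meson not_le)
    moreover have "0 \<le> t" using G[OF j(1)] j(2) ore_op_neg_index by (meson not_le)
    ultimately show ?thesis by simp
  qed (use l in simp)
  then have sub: "?S \<subseteq> {0..l}" by blast
  have "diag_op G 0 0 l \<noteq> 0"
    using G[OF assms(1)] op_deg_coeff_nonzero[OF ore_op_laurent, of "G 0"] by (simp add: diag_op_def)
  then have "l \<in> ?S" using assms(1) by blast
  moreover have "finite ?S" by (rule finite_subset[OF sub]) simp
  ultimately show ?thesis
    unfolding op_mat_order_def
  proof (rule Max_eqI[rotated 2])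
    show "y \<le> l" if "y \<in> ?S" for y using subsetD[OF sub that] by simp
  qed
qed

text \<open>Equal degrees of the diagonal entries make the leading coefficient matrix diagonal and
  invertible.\<close>
lemma head_regular_diag_op:
  fixes G :: "nat \<Rightarrow> 'k::field op"
  assumes "\<And>i. i < r \<Longrightarrow> ore_op (G i) \<and> G i \<noteq> op_zero \<and> op_deg (G i) = l"
  shows "head_regular (diag_op G) r"
proof (cases "r = 0")
  case True
  then show ?thesis unfolding head_regular_def by (intro det_coeff_mat_diag_op) simp
next
  case False
  then have order: "op_mat_order (diag_op G) r = l" by (intro op_mat_order_diag_op[OF _ assms]) simp
  have "G i l \<noteq> 0" if "i < r" for i
    using assms[OF that] op_deg_coeff_nonzero[OF ore_op_laurent] by metis
  then show ?thesis unfolding head_regular_def order by (rule det_coeff_mat_diag_op)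
qed

lemma
  fixes c :: "'k::field"
  assumes "c \<noteq> 0"
  shows ore_op_scale: "ore_op (\<lambda>k. c * L k) \<longleftrightarrow> ore_op L"
    and op_deg_scale: "op_deg (\<lambda>k. c * L k) = op_deg L"
    and scale_eq_op_zero_iff: "(\<lambda>k. c * L k) = op_zero \<longleftrightarrow> L = op_zero"
  using assms by (simp_all add: ore_op_def laurent_op_def op_deg_def op_supp_def op_zero_def fun_eq_iff)

lemma diag_op_scale:
  fixes c :: "'k::mult_zero"
  shows "(\<lambda>i j k. c * diag_op F i j k) = diag_op (\<lambda>i k. c * F i k)"
  by (auto simp: fun_eq_iff diag_op_def op_zero_def)

context field_automorphism
begin

lemma diag_op_mult:
  assumes "i < m" shows "mat_mult s (diag_op f) B m i j = op_mult s (f i) (B i j)"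
proof -
  have "mat_mult s (diag_op f) B m i j = op_sum (\<lambda>h. if h = i then op_mult s (f h) (B h j) else op_zero) {..<m}"
    unfolding mat_mult_entry by (rule op_sum_cong) (auto simp: diag_op_def)
  then show ?thesis using assms by (simp add: op_sum_delta)
qed

lemma diag_op_mult_diag_op:
  "i < m \<Longrightarrow> mat_mult s (diag_op f) (diag_op g) m i j = (if i = j then op_mult s (f i) (g i) else op_zero)"
  by (simp add: diag_op_mult) (simp add: diag_op_def)

lemma laurent_inverses_diag_monom:
  "laurent_inverses (diag_op (\<lambda>i. op_monom 1 (k i))) (diag_op (\<lambda>i. op_monom 1 (- k i))) m"
proof -
  have "mat_eq (mat_mult s (diag_op (\<lambda>i. op_monom 1 (e * k i))) (diag_op (\<lambda>i. op_monom 1 (- e * k i))) m) mat_id m m"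
    for e :: int
    by (auto simp: mat_eq_def diag_op_mult_diag_op mat_id_def op_mult_monom_monom op_monom_1_0)
  from this[of 1] this[of "-1"] show ?thesis
    by (simp add: laurent_inverses_def is_inverse_def laurent_mat_def diag_op_def)
qed

text \<open>Multiplying row \<open>i\<close> by \<open>\<sigma>^(-low)\<close> of its diagonal entry makes every entry have a nonzero constant
  term; this \<open>W\<close> is unimodular only over \<open>F(t)[\<sigma>,\<sigma>\<^sup>-\<^sup>1]\<close>.\<close>
lemma tail_regularisable_diag_op:
  assumes "\<And>i. i < r \<Longrightarrow> ore_op (G i) \<and> G i \<noteq> op_zero"
  shows "\<exists>W. unimodular_laurent s W r \<and> ore_mat (mat_mult s W (diag_op G) r) r r \<and>
    tail_regular (mat_mult s W (diag_op G) r) r"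
proof -
  let ?W = "diag_op (\<lambda>i. op_monom 1 (- op_low (G i)))"
  define H where "H i = (\<lambda>t. sp (- op_low (G i)) (G i (t + op_low (G i))))" for i
  have WG: "mat_mult s ?W (diag_op G) r i j = diag_op H i j" if "i < r" for i j
    using that by (simp add: diag_op_mult) (auto simp: diag_op_def op_mult_monom_left H_def fun_eq_iff op_coeff_simps)
  have low: "G i (op_low (G i)) \<noteq> 0" "\<And>t. t < op_low (G i) \<Longrightarrow> G i t = 0" if "i < r" for i
    using op_low_coeff_nonzero coeff_below_op_low assms[OF that] ore_op_laurent by blast+
  have "ore_op (H i)" if "i < r" for i
  proof -
    have "op_supp (H i) \<subseteq> (\<lambda>t. t - op_low (G i)) ` op_supp (G i)"
      by (force simp: op_supp_def H_def)
    then have "finite (op_supp (H i))"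
      using assms[OF that] by (meson finite_imageI finite_subset laurent_op_def ore_op_def)
    moreover have "H i t = 0" if "t < 0" for t using low(2)[OF \<open>i < r\<close>, of "t + op_low (G i)"] that
      by (simp add: H_def)
    ultimately show ?thesis by (simp add: ore_op_def laurent_op_def)
  qed
  then have "ore_mat (diag_op H) r r" by (simp add: ore_mat_def diag_op_def)
  then have "ore_mat (mat_mult s ?W (diag_op G) r) r r" by (simp add: ore_mat_def WG)
  moreover have "tail_regular (mat_mult s ?W (diag_op G) r) r"
  proof -
    have "coeff_mat (mat_mult s ?W (diag_op G) r) r 0 = coeff_mat (diag_op H) r 0"
      by (auto simp: coeff_mat_def WG)
    then show ?thesis
      using det_coeff_mat_diag_op[of r H 0] low(1) by (simp add: tail_regular_def H_def)
  qed
  moreover have "unimodular_laurent s ?W r"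
    using laurent_inverses_unimodular[OF laurent_inverses_diag_monom] by simp
  ultimately show ?thesis by blast
qed

text \<open>By the diagonal form, after rescaling each row with a power of \<open>\<sigma>\<close> all diagonal entries
  have the same degree \<open>l\<close>; the price is that \<open>P\<close> becomes a Laurent operator matrix.\<close>
lemma equivalent_diag_op_same_degree:
  assumes A: "ore_mat A m n"
  obtains P Pv Q Qv F l where "laurent_inverses P Pv m" "ore_inverses Q Qv n"
    "op_rank s A m n \<le> m" "op_rank s A m n \<le> n"
    "\<And>i. i < op_rank s A m n \<Longrightarrow> ore_op (F i) \<and> F i \<noteq> op_zero \<and> op_deg (F i) = l"
    "mat_eq (mat_mult s (mat_mult s P A m) Q n)
       (\<lambda>i j. if i < op_rank s A m n \<and> j < op_rank s A m n then diag_op F i j else op_zero) m n"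
proof -
  obtain P0 Pv0 Q Qv r d where PQ: "ore_inverses P0 Pv0 m" "ore_inverses Q Qv n"
    and d: "r \<le> m" "r \<le> n" "\<forall>i<r. ore_op (d i) \<and> d i \<noteq> op_zero"
      "mat_eq (mat_mult s (mat_mult s P0 A m) Q n) (trunc_diag d r) m n"
    using reduces_to_diagonal_form[OF A] unfolding reduces_to_def diagonal_form_def by blast
  have rank: "op_rank s A m n = r" by (rule op_rank_eq_diagonal[OF A PQ d(4) d(1-3)])
  define l where "l = Max (insert 0 ((\<lambda>i. op_deg (d i)) ` {..<r}))"
  define k where "k i = (if i < r then l - op_deg (d i) else 0)" for i
  let ?D = "diag_op (\<lambda>i. op_monom (1 :: 'k) (k i))"
  define F where "F i = op_mult s (op_monom 1 (k i)) (d i)" for i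
  have F: "ore_op (F i) \<and> F i \<noteq> op_zero \<and> op_deg (F i) = l" if i: "i < r" for i
  proof -
    have "0 \<le> k i" using i by (simp add: k_def l_def Max_ge_iff)
    moreover have "op_monom (1 :: 'k) (k i) \<noteq> op_zero" by (auto simp: op_monom_def fun_eq_iff op_zero_def)
    moreover have "op_deg (op_monom (1 :: 'k) (k i)) = k i"
      by (rule op_degI[OF laurent_op_monom]) (auto simp: op_monom_def)
    ultimately show ?thesis
      using d(3) i op_mult_nonzero[of "op_monom 1 (k i)" "d i"] op_deg_mult[of "op_monom 1 (k i)" "d i"]
      by (auto simp: F_def k_def ore_op_monom ore_op_laurent)
  qed
  have lD: "laurent_inverses ?D (diag_op (\<lambda>i. op_monom 1 (- k i))) m"
    by (rule laurent_inverses_diag_monom)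
  have lP0: "laurent_mat P0 m m" and lQ: "laurent_mat Q n n" and lA: "laurent_mat A m n"
    using PQ A by (auto simp: ore_inverses_def ore_mat_laurent)
  have lDm: "laurent_mat ?D m m" using lD by (simp add: laurent_inverses_def)
  have "mat_eq (mat_mult s (mat_mult s (mat_mult s ?D P0 m) A m) Q n)
               (mat_mult s (mat_mult s ?D (mat_mult s P0 A m) m) Q n) m n"
    by (rule mat_mult_cong_left, rule mat_mult_assoc[OF lDm lP0])
  moreover have "mat_eq (mat_mult s (mat_mult s ?D (mat_mult s P0 A m) m) Q n)
               (mat_mult s ?D (mat_mult s (mat_mult s P0 A m) Q n) m) m n"
    by (rule mat_mult_assoc[OF lDm laurent_mat_mult[OF lP0 lA]])
  moreover have "mat_eq (mat_mult s ?D (mat_mult s (mat_mult s P0 A m) Q n) m) (mat_mult s ?D (trunc_diag d r) m) m n"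
    by (rule mat_mult_cong_right[OF d(4)])
  moreover have "mat_eq (mat_mult s ?D (trunc_diag d r) m) (\<lambda>i j. if i < r \<and> j < r then diag_op F i j else op_zero) m n"
    unfolding mat_eq_def by (simp add: diag_op_mult) (auto simp: trunc_diag_def diag_op_def F_def k_def)
  ultimately have "mat_eq (mat_mult s (mat_mult s (mat_mult s ?D P0 m) A m) Q n)
      (\<lambda>i j. if i < r \<and> j < r then diag_op F i j else op_zero) m n"
    by (meson mat_eq_trans)
  moreover have "laurent_inverses (mat_mult s ?D P0 m) (mat_mult s Pv0 (diag_op (\<lambda>i. op_monom 1 (- k i))) m) m"
    by (rule laurent_inverses_mult[OF ore_inverses_laurent[OF PQ(1)] lD])
  ultimately show ?thesis using that PQ(2) F d(1,2) unfolding rank by blast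
qed

lemma mat_apply_block:
  assumes "r \<le> n"
  shows "mat_apply s (\<lambda>i j. if i < r \<and> j < r then B i j else op_zero) n z i =
    (if i < r then mat_apply s B r z i else 0)"
proof (cases "i < r")
  case True
  have "mat_apply s (\<lambda>i j. if i < r \<and> j < r then B i j else op_zero) n z i
      = (\<Sum>j<n. if j < r then op_apply s (B i j) (z j) else 0)"
    unfolding mat_apply_def by (rule sum.cong) (use True in auto)
  also have "\<dots> = (\<Sum>j<r. op_apply s (B i j) (z j))"
    by (rule sym, rule sum.mono_neutral_cong_left) (use assms in auto)
  finally show ?thesis using True by (simp add: mat_apply_def)
qed (simp add: mat_apply_def)

text \<open>Solving \<open>A y = b\<close> is solving the block system after the substitution \<open>y = Q z\<close>,
  because \<open>P\<close> is injective on vectors.\<close>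
lemma solutions_block_form:
  assumes A: "ore_mat A m n" and P: "laurent_inverses P Pv m" and Q: "ore_inverses Q Qv n"
    and r: "r \<le> m" "r \<le> n"
    and eq: "mat_eq (mat_mult s (mat_mult s P A m) Q n) (\<lambda>i j. if i < r \<and> j < r then B i j else op_zero) m n"
  shows "(\<forall>i<m. mat_apply s A n y i = b i) \<longleftrightarrow>
         (\<forall>i\<in>{r..<m}. mat_apply s P m b i = 0) \<and>
         (\<forall>i<r. mat_apply s B r (mat_apply s Qv n y) i = mat_apply s P m b i)"
proof -
  define z where "z = mat_apply s Qv n y"
  have lA: "laurent_mat A m n" using ore_mat_laurent[OF A] .
  have lP: "laurent_mat P m m" "laurent_mat Pv m m" "is_inverse s P Pv m"
    using P by (auto simp: laurent_inverses_def)
  have lQ: "laurent_mat Q n n" "laurent_mat Qv n n" "is_inverse s Q Qv n"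
    using Q by (auto simp: ore_inverses_def ore_mat_laurent)
  have lPA: "laurent_mat (mat_mult s P A m) m n" using laurent_mat_mult[OF lP(1) lA] .
  have yz: "mat_apply s Q n z j = y j" if "j < n" for j
  proof -
    have "mat_eq (mat_mult s Q Qv n) mat_id n n" using lQ(3) by (simp add: is_inverse_def)
    then show ?thesis unfolding z_def by (rule mat_apply_inverse[OF lQ(1,2) _ that])
  qed
  have PAy: "mat_apply s P m (mat_apply s A n y) i = (if i < r then mat_apply s B r z i else 0)"
    if i: "i < m" for i
  proof -
    have "mat_apply s P m (mat_apply s A n y) i = mat_apply s (mat_mult s P A m) n y i"
      by (rule mat_apply_mult[OF lP(1) lA i, symmetric])
    also have "\<dots> = mat_apply s (mat_mult s P A m) n (mat_apply s Q n z) i"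
      by (rule mat_apply_cong) (use yz in auto)
    also have "\<dots> = mat_apply s (mat_mult s (mat_mult s P A m) Q n) n z i"
      by (rule mat_apply_mult[OF lPA lQ(1) i, symmetric])
    also have "\<dots> = mat_apply s (\<lambda>i j. if i < r \<and> j < r then B i j else op_zero) n z i"
      by (rule mat_apply_cong_mat) (use eq i in \<open>auto simp: mat_eq_def\<close>)
    finally show ?thesis by (simp add: mat_apply_block[OF r(2)])
  qed
  have P_inj: "x i = x' i"
    if "\<And>i. i < m \<Longrightarrow> mat_apply s P m x i = mat_apply s P m x' i" "i < m" for x x' i
    by (rule mat_apply_cancel_left[OF lP(2,1) _ that]) (use lP(3) in \<open>simp add: is_inverse_def\<close>)
  show ?thesis
  proof
    assume "\<forall>i<m. mat_apply s A n y i = b i"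
    then have "mat_apply s P m (mat_apply s A n y) i = mat_apply s P m b i" for i
      by (intro mat_apply_cong) simp
    then have "mat_apply s P m b i = (if i < r then mat_apply s B r z i else 0)" if "i < m" for i
      using PAy[OF that] by simp
    then show "(\<forall>i\<in>{r..<m}. mat_apply s P m b i = 0) \<and> (\<forall>i<r. mat_apply s B r (mat_apply s Qv n y) i = mat_apply s P m b i)"
      using r unfolding z_def by auto
  next
    assume "(\<forall>i\<in>{r..<m}. mat_apply s P m b i = 0) \<and> (\<forall>i<r. mat_apply s B r (mat_apply s Qv n y) i = mat_apply s P m b i)"
    then have "mat_apply s P m (mat_apply s A n y) i = mat_apply s P m b i" if "i < m" for i
      using PAy[OF that] that unfolding z_def by (cases "i < r") auto
    then show "\<forall>i<m. mat_apply s A n y i = b i" using P_inj by blast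
  qed
qed

end

lemma fully_regular_diag_op:
  assumes "is_automorphism s" "poly_coeff_mat (diag_op G) r"
    and "\<And>i. i < r \<Longrightarrow> ore_op (G i) \<and> G i \<noteq> op_zero \<and> op_deg (G i) = l"
  shows "fully_regular s (diag_op G) b r"
proof -
  interpret field_automorphism s by unfold_locales (fact assms(1))
  show ?thesis
    unfolding fully_regular_def
  proof (intro conjI)
    show "head_regular (diag_op G) r" by (rule head_regular_diag_op[OF assms(3)])
    show "\<exists>W. unimodular_laurent s W r \<and> ore_mat (mat_mult s W (diag_op G) r) r r \<and>
        tail_regular (mat_mult s W (diag_op G) r) r"
      by (rule tail_regularisable_diag_op) (use assms(3) in blast)
  qed (rule assms(2))
qed

section \<open>Clearing denominators\<close>

lemma embP_mult: "embP p * embP q = embP (p * q)"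
  by (simp add: embP_def)

lemma embP_eq_0_iff: "embP p = 0 \<longleftrightarrow> p = 0"
  by (simp add: embP_def Zero_fract_def eq_fract)

lemma common_denominator:
  assumes "finite X"
  shows "\<exists>p. p \<noteq> 0 \<and> (\<forall>x\<in>X. embP p * (x :: 'a::field poly fract) \<in> range embP)"
  using assms
proof (induction X rule: finite_induct)
  case empty
  show ?case by (intro exI[of _ 1]) simp
next
  case (insert x X)
  obtain p where p: "p \<noteq> 0" "\<forall>y\<in>X. embP p * y \<in> range embP" using insert.IH by blast
  obtain a b where x: "x = Fract a b" "b \<noteq> 0" by (cases x rule: Fract_cases)
  have "embP (p * b) * y \<in> range embP" if y: "y \<in> insert x X" for y
  proof (cases "y = x")
    case True
    have "embP (p * b) * y = embP (p * a)" using True x by (simp add: embP_def eq_fract ac_simps)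
    then show ?thesis by simp
  next
    case False
    then have "embP p * y \<in> range embP" using p(2) y by simp
    then obtain c where "embP p * y = embP c" by blast
    have "embP (p * b) * y = embP b * (embP p * y)"
      unfolding embP_mult[symmetric] by (simp only: mult.assoc mult.left_commute[of "embP p"])
    then have "embP (p * b) * y = embP (b * c)" using \<open>embP p * y = embP c\<close> by (simp add: embP_mult)
    then show ?thesis by simp
  qed
  then show ?case using p(1) x(2) by (intro exI[of _ "p * b"]) simp
qed

lemma common_denominator_diag_op:
  assumes "\<And>i. i < r \<Longrightarrow> ore_op (F i)"
  obtains p where "p \<noteq> 0" "poly_coeff_mat (diag_op (\<lambda>i k. embP p * F i k)) r"
    "\<forall>i<r. embP p * v i \<in> range embP"
proof -
  let ?X = "(\<Union>i<r. F i ` op_supp (F i)) \<union> v ` {..<r}"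
  have "finite ?X" using assms by (auto simp: ore_op_def laurent_op_def)
  then obtain p where p: "p \<noteq> 0" "\<forall>x\<in>?X. embP p * x \<in> range embP"
    using common_denominator by blast
  have "embP p * F i k \<in> range embP" if "i < r" for i k
  proof (cases "F i k = 0")
    case True
    then have "embP p * F i k = embP 0" by (simp add: embP_def Zero_fract_def)
    then show ?thesis by (rule range_eqI)
  next
    case False
    then show ?thesis using p(2) that by (auto simp: op_supp_def)
  qed
  moreover have "ore_op (\<lambda>k. embP p * F i k)" if "i < r" for i
    using assms[OF that] p(1) by (simp add: ore_op_scale embP_eq_0_iff)
  moreover have "op_zero k \<in> range embP" for k :: int
    by (rule range_eqI[of _ _ 0]) (simp add: embP_def Zero_fract_def op_zero_def)
  ultimately have "poly_coeff_mat (diag_op (\<lambda>i k. embP p * F i k)) r"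
    by (auto simp: poly_coeff_mat_def ore_mat_def diag_op_def)
  then show ?thesis using that p by auto
qed

lemma clear_denominators_fully_regular:
  assumes "is_automorphism s" and F: "\<And>i. i < r \<Longrightarrow> ore_op (F i) \<and> F i \<noteq> op_zero \<and> op_deg (F i) = l"
  shows "\<exists>p. p \<noteq> 0 \<and> poly_coeff_mat (\<lambda>i j k. embP p * diag_op F i j k) r \<and>
    (\<forall>i<r. embP p * v i \<in> range embP) \<and>
    fully_regular s (\<lambda>i j k. embP p * diag_op F i j k) (\<lambda>i. embP p * v i) r"
proof -
  obtain p where p: "p \<noteq> 0" "poly_coeff_mat (diag_op (\<lambda>i k. embP p * F i k)) r"
      "\<forall>i<r. embP p * v i \<in> range embP"
    using common_denominator_diag_op[of r F v] F by blast
  have "embP p \<noteq> 0" using p(1) by (simp add: embP_eq_0_iff)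
  then have "fully_regular s (diag_op (\<lambda>i k. embP p * F i k)) (\<lambda>i. embP p * v i) r"
    using F by (intro fully_regular_diag_op[OF assms(1) p(2)]) (simp add: ore_op_scale op_deg_scale scale_eq_op_zero_iff)
  then show ?thesis using p unfolding diag_op_scale by blast
qed

theorem theorem5:
  fixes s0 :: "'a::field_char_0 \<Rightarrow> 'a" and s :: "'a poly fract \<Rightarrow> 'a poly fract"
    and A :: "'a poly fract opmat" and b :: "nat \<Rightarrow> 'a poly fract" and m n :: nat
  assumes "PiSigma_ext s0 s" and "ore_mat A m n"
  shows "\<exists>r P Q Qi Ahat.
     r = op_rank s A m n \<and> r \<le> m \<and> r \<le> n \<and>
     unimodular_laurent s P m \<and>
     ore_mat Q n n \<and> ore_mat Qi n n \<and> is_inverse s Q Qi n \<and>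
     ore_mat Ahat r r \<and>
     mat_eq (mat_mult s (mat_mult s P A m) Q n)
            (\<lambda>i j. if i < r \<and> j < r then Ahat i j else op_zero) m n \<and>
     (\<forall>y. (\<forall>i<m. mat_apply s A n y i = b i) \<longleftrightarrow>
          ((\<forall>i\<in>{r..<m}. mat_apply s P m b i = 0) \<and>
           (\<forall>i<r. mat_apply s Ahat r (mat_apply s Qi n y) i = mat_apply s P m b i))) \<and>
     (\<exists>p. p \<noteq> 0 \<and>
        poly_coeff_mat (\<lambda>i j k. embP p * Ahat i j k) r \<and>
        (\<forall>i<r. embP p * mat_apply s P m b i \<in> range embP) \<and>
        fully_regular s (\<lambda>i j k. embP p * Ahat i j k) (\<lambda>i. embP p * mat_apply s P m b i) r)"
proof -
  have aut: "is_automorphism s" using assms(1) by (simp add: PiSigma_ext_def)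
  interpret field_automorphism s by unfold_locales (fact aut)
  let ?r = "op_rank s A m n"
  obtain P Pv Q Qv F l where PQ: "laurent_inverses P Pv m" "ore_inverses Q Qv n"
    and r: "?r \<le> m" "?r \<le> n" and F: "\<And>i. i < ?r \<Longrightarrow> ore_op (F i) \<and> F i \<noteq> op_zero \<and> op_deg (F i) = l"
    and eq: "mat_eq (mat_mult s (mat_mult s P A m) Q n)
       (\<lambda>i j. if i < ?r \<and> j < ?r then diag_op F i j else op_zero) m n"
    by (rule equivalent_diag_op_same_degree[OF assms(2)]) blast
  have "ore_mat (diag_op F) ?r ?r" using F by (simp add: ore_mat_def diag_op_def)
  moreover have "\<forall>y. (\<forall>i<m. mat_apply s A n y i = b i) \<longleftrightarrow>
      (\<forall>i\<in>{?r..<m}. mat_apply s P m b i = 0) \<and>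
      (\<forall>i<?r. mat_apply s (diag_op F) ?r (mat_apply s Qv n y) i = mat_apply s P m b i)"
    using solutions_block_form[OF assms(2) PQ r eq] by blast
  moreover have "ore_mat Q n n" "ore_mat Qv n n" "is_inverse s Q Qv n"
    using PQ(2) by (simp_all add: ore_inverses_def)
  moreover note clear_denominators_fully_regular[OF aut F, where v = "mat_apply s P m b"]
  ultimately show ?thesis
    using laurent_inverses_unimodular[OF PQ(1)] r eq
    by (intro exI[of _ ?r] exI[of _ P] exI[of _ Q] exI[of _ Qv] exI[of _ "diag_op F"] conjI refl)
       assumption+
qed

end
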